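(* In the setting described in the context (in particular $b\ge1000\log^2n$), with $\overline\mu=\overline x\,\overline s$ and $\overline\mu^{\mathrm{new}}=(\overline x+\widehat\delta_x)(\overline s+\widehat\delta_s)$: 1. $\|\mathbb E[\overline\mu^{-1}(\overline\mu^{\mathrm{new}}-\overline\mu-\overline\delta_t-\widetilde\delta_\Phi)]\|_2\le9\epsilon_{\mathrm{mp}}\epsilon+4\epsilon^2+2\epsilon^2\sqrt n/b$; 2. $\operatorname{Var}[\overline\mu_i^{-1}\overline\mu_i^{\mathrm{new}}]\le16\epsilon_{\mathrm{mp}}^2\epsilon^2/b+320\epsilon^4/b$ holds with probability at least $1-1/\operatorname{poly}(n)$ for all $i\in[n]$; 3. $\|\overline\mu^{-1}(\overline\mu^{\mathrm{new}}-\overline\mu)\|_\infty\le6\epsilon$ with probability at least $1-1/\operatorname{poly}(n)$; 4. $\|\mathbb E[\overline\mu^{-1}(\overline\mu^{\mathrm{new}}-\overline\mu)]\|_2\le6\epsilon+2\epsilon^2\sqrt n/b$.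
   Context: Let $n\ge2$ and $A\in\mathbb{R}^{d\times n}$ have full row rank $d\le n$. Products, quotients, square roots and inverses of vectors are coordinatewise; for $u\in\mathbb{R}^n$, $U=\operatorname{diag}(u)$. For $u\in\mathbb{R}^n_{>0}$ and $v\in\mathbb{R}^n_{>0}$ (or a scalar $v>0$, identified with $v\mathbf 1$), $u\approx_\gamma v$ means $(1-\gamma)v_i\le u_i\le(1+\gamma)v_i$ for all $i$. Parameters: $\epsilon,\epsilon_{\mathrm{mp}}\in(0,10^{-4})$, $\lambda>\log n$, $b\ge1000\log^2n$; $\Phi_\lambda(r)=\sum_i\cosh(\lambda r_i)$, $\nabla\Phi_\lambda(r)=(\lambda\sinh(\lambda r_i))_i$. Let $t>0$, $t^{\mathrm{new}}=(1-\frac{\epsilon}{3\sqrt n})t$. Let $\overline x,\overline s\in\mathbb{R}^n_{>0}$, $\overline w=\overline x/\overline s$, $\overline\mu=\overline x\,\overline s$, $\overline\delta_t=(\frac{t^{\mathrm{new}}}{t}-1)\overline\mu$. Let $\widetilde w,\widetilde\mu\in\mathbb{R}^n_{>0}$ satisfy $\widetilde\mu\approx_{\epsilon_{\mathrm{mp}}}\overline\mu$, $\widetilde w\approx_{\epsilon_{\mathrm{mp}}}\overline w$, $\overline\mu\approx_{0.1}t$. Define $\widetilde x=\sqrt{\widetilde w\widetilde\mu}$, $\widetilde s=\sqrt{\widetilde\mu/\widetilde w}$, $\widetilde P=\widetilde W^{1/2}A^\top(A\widetilde WA^\top)^{-1}A\widetilde W^{1/2}$, $\widetilde\delta_t=(\frac{t^{\mathrm{new}}}{t}-1)\widetilde\mu$,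 $\widetilde\delta_\Phi=-\frac\epsilon2t^{\mathrm{new}}\frac{\nabla\Phi_\lambda(\widetilde\mu/t-1)}{\|\nabla\Phi_\lambda(\widetilde\mu/t-1)\|_2}$ (gradient assumed nonzero), $\widetilde\delta_\mu=\widetilde\delta_t+\widetilde\delta_\Phi$. Let $R\in\mathbb{R}^{b\times n}$ be a random subsampled randomized Hadamard transform; for every fixed $h\in\mathbb{R}^n$, every $i$ and $\delta\in(0,1)$: $\mathbb E[R^\top Rh]=h$, $\mathbb E[(R^\top Rh)_i^2]\le h_i^2+\frac1b\|h\|_2^2$, $\Pr[|(R^\top Rh)_i-h_i|>\|h\|_2\log(n/\delta)/\sqrt b]\le\delta$. Define $\widehat\delta_x=\widetilde X(\widetilde X\widetilde S)^{-1/2}(I-R^\top R\widetilde P)(\widetilde X\widetilde S)^{-1/2}\widetilde\delta_\mu$ and $\widehat\delta_s=\widetilde S(\widetilde X\widetilde S)^{-1/2}R^\top R\widetilde P(\widetilde X\widetilde S)^{-1/2}\widetilde\delta_\mu$. Expectations, variances and probabilities are over $R$. *)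

theory Defs
  imports "HOL-Probability.Probability" "Jordan_Normal_Form.DL_Rank"
    "Jordan_Normal_Form.Gauss_Jordan_Elimination"
begin

no_notation vec_nth (infixl "$" 90)

definition vmul :: "real vec \<Rightarrow> real vec \<Rightarrow> real vec" where
  "vmul u v = Matrix.vec (dim_vec u) (\<lambda>i. u $ i * v $ i)"

definition vdivide :: "real vec \<Rightarrow> real vec \<Rightarrow> real vec" where
  "vdivide u v = Matrix.vec (dim_vec u) (\<lambda>i. u $ i / v $ i)"

definition vsqrt :: "real vec \<Rightarrow> real vec" where
  "vsqrt u = Matrix.vec (dim_vec u) (\<lambda>i. sqrt (u $ i))"

definition vinv :: "real vec \<Rightarrow> real vec" where
  "vinv u = Matrix.vec (dim_vec u) (\<lambda>i. 1 / u $ i)"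

definition vdiag :: "real vec \<Rightarrow> real mat" where
  "vdiag u = mat_diag (dim_vec u) (\<lambda>i. u $ i)"

definition norm2 :: "real vec \<Rightarrow> real" where
  "norm2 u = sqrt (\<Sum>i<dim_vec u. (u $ i)\<^sup>2)"

definition approx_vec :: "real vec \<Rightarrow> real \<Rightarrow> real vec \<Rightarrow> bool" where
  "approx_vec u \<gamma> v \<longleftrightarrow> dim_vec u = dim_vec v \<and>
     (\<forall>i<dim_vec v. (1 - \<gamma>) * v $ i \<le> u $ i \<and> u $ i \<le> (1 + \<gamma>) * v $ i)"

definition approx_scal :: "real vec \<Rightarrow> real \<Rightarrow> real \<Rightarrow> bool" where
  "approx_scal u \<gamma> c \<longleftrightarrow> (\<forall>i<dim_vec u. (1 - \<gamma>) * c \<le> u $ i \<and> u $ i \<le> (1 + \<gamma>) * c)"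

definition pos_vec :: "real vec \<Rightarrow> bool" where
  "pos_vec u \<longleftrightarrow> (\<forall>i<dim_vec u. 0 < u $ i)"

text \<open>Gradient of \<Phi>_\<lambda>(r) = \<Sum>_i cosh(\<lambda> r_i).\<close>
definition gradPhi :: "real \<Rightarrow> real vec \<Rightarrow> real vec" where
  "gradPhi lam r = Matrix.vec (dim_vec r) (\<lambda>i. lam * sinh (lam * r $ i))"

definition full_row_rank :: "nat \<Rightarrow> nat \<Rightarrow> real mat \<Rightarrow> bool" where
  "full_row_rank d n A \<longleftrightarrow> A \<in> carrier_mat d n \<and> vec_space.rank d A = d"

definition minv :: "real mat \<Rightarrow> real mat" where
  "minv M = the (mat_inverse M)"

definition projP :: "real mat \<Rightarrow> real vec \<Rightarrow> real mat" where
  "projP A w = vdiag (vsqrt w) * transpose_mat A * minv (A * vdiag w * transpose_mat A)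
               * A * vdiag (vsqrt w)"

definition tnew :: "nat \<Rightarrow> real \<Rightarrow> real \<Rightarrow> real" where
  "tnew n eps t = (1 - eps / (3 * sqrt (real n))) * t"

definition delta_t :: "nat \<Rightarrow> real \<Rightarrow> real \<Rightarrow> real vec \<Rightarrow> real vec" where
  "delta_t n eps t mu = (tnew n eps t / t - 1) \<cdot>\<^sub>v mu"

definition delta_Phi :: "nat \<Rightarrow> real \<Rightarrow> real \<Rightarrow> real \<Rightarrow> real vec \<Rightarrow> real vec" where
  "delta_Phi n eps lam t mu =
     (let g = gradPhi lam (Matrix.vec (dim_vec mu) (\<lambda>i. mu $ i / t - 1))
      in (- (eps / 2) * tnew n eps t / norm2 g) \<cdot>\<^sub>v g)"

definition xtil :: "real vec \<Rightarrow> real vec \<Rightarrow> real vec" where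
  "xtil w mu = vsqrt (vmul w mu)"

definition stil :: "real vec \<Rightarrow> real vec \<Rightarrow> real vec" where
  "stil w mu = vsqrt (vdivide mu w)"

definition delta_mu :: "nat \<Rightarrow> real \<Rightarrow> real \<Rightarrow> real \<Rightarrow> real vec \<Rightarrow> real vec" where
  "delta_mu n eps lam t mu = delta_t n eps t mu + delta_Phi n eps lam t mu"

definition hat_dx :: "nat \<Rightarrow> real \<Rightarrow> real \<Rightarrow> real \<Rightarrow> real mat \<Rightarrow> real vec \<Rightarrow> real vec
    \<Rightarrow> real mat \<Rightarrow> real vec" where
  "hat_dx n eps lam t A w mu R =
     (let X = vdiag (xtil w mu); S = vdiag (stil w mu);
          XSh = vdiag (vinv (vsqrt (vmul (xtil w mu) (stil w mu))))
      in X * XSh * (1\<^sub>m n - transpose_mat R * R * projP A w) * XSh *\<^sub>v delta_mu n eps lam t mu)"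

definition hat_ds :: "nat \<Rightarrow> real \<Rightarrow> real \<Rightarrow> real \<Rightarrow> real mat \<Rightarrow> real vec \<Rightarrow> real vec
    \<Rightarrow> real mat \<Rightarrow> real vec" where
  "hat_ds n eps lam t A w mu R =
     (let S = vdiag (stil w mu);
          XSh = vdiag (vinv (vsqrt (vmul (xtil w mu) (stil w mu))))
      in S * XSh * transpose_mat R * R * projP A w * XSh *\<^sub>v delta_mu n eps lam t mu)"

definition mu_new :: "nat \<Rightarrow> real \<Rightarrow> real \<Rightarrow> real \<Rightarrow> real mat \<Rightarrow> real vec \<Rightarrow> real vec
    \<Rightarrow> real vec \<Rightarrow> real vec \<Rightarrow> real mat \<Rightarrow> real vec" where
  "mu_new n eps lam t A w mu xb sb R =
     vmul (xb + hat_dx n eps lam t A w mu R) (sb + hat_ds n eps lam t A w mu R)"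

text \<open>Hypotheses on the random sketch R : \<Omega> \<rightarrow> R^{b x n} (SRHT), as listed in the context.\<close>
definition sketch_hyps :: "'w measure \<Rightarrow> nat \<Rightarrow> nat \<Rightarrow> ('w \<Rightarrow> real mat) \<Rightarrow> bool" where
  "sketch_hyps M b n R \<longleftrightarrow>
     prob_space M \<and>
     (\<forall>\<omega>\<in>space M. R \<omega> \<in> carrier_mat b n) \<and>
     (\<forall>i j. (\<lambda>\<omega>. R \<omega> $$ (i, j)) \<in> borel_measurable M) \<and>
     (\<forall>h \<in> carrier_vec n. \<forall>i<n.
        integrable M (\<lambda>\<omega>. (transpose_mat (R \<omega>) * R \<omega> *\<^sub>v h) $ i) \<and>
        integral\<^sup>L M (\<lambda>\<omega>. (transpose_mat (R \<omega>) * R \<omega> *\<^sub>v h) $ i) = h $ i \<and>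
        integrable M (\<lambda>\<omega>. ((transpose_mat (R \<omega>) * R \<omega> *\<^sub>v h) $ i)\<^sup>2) \<and>
        integral\<^sup>L M (\<lambda>\<omega>. ((transpose_mat (R \<omega>) * R \<omega> *\<^sub>v h) $ i)\<^sup>2)
          \<le> (h $ i)\<^sup>2 + (norm2 h)\<^sup>2 / real b \<and>
        (\<forall>\<delta>. 0 < \<delta> \<and> \<delta> < 1 \<longrightarrow>
          measure M {\<omega> \<in> space M. \<bar>(transpose_mat (R \<omega>) * R \<omega> *\<^sub>v h) $ i - h $ i\<bar>
              > norm2 h * ln (real n / \<delta>) / sqrt (real b)} \<le> \<delta>))"

end

theory Submission
  imports Defs
begin

text \<open>Put \<open>v = \<widetilde>\<delta>\<^sub>\<mu> / \<surd>\<widetilde>\<mu>\<close>, \<open>h = \<widetilde>P v\<close> and \<open>Y\<^sub>i = (R\<^sup>T R h)\<^sub>i\<close>. In coordinates the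
  sketched step is \<open>\<widehat>\<delta>\<^sub>x = \<surd>\<widetilde>w (v - Y)\<close> and \<open>\<widehat>\<delta>\<^sub>s = Y / \<surd>\<widetilde>w\<close>, so
  \<open>\<mu>\<^sup>n\<^sup>e\<^sup>w\<^sub>i = \<mu>\<^sub>i + \<kappa>\<^sub>i \<widetilde>\<delta>\<^sub>\<mu>\<^sub>,\<^sub>i + (\<xi>\<^sub>i + v\<^sub>i) Y\<^sub>i - Y\<^sub>i\<^sup>2\<close> is a quadratic polynomial in a single
  random variable, with scaling errors \<open>\<kappa>\<^sub>i - 1\<close> and \<open>\<xi>\<^sub>i / \<surd>\<mu>\<^sub>i\<close> of order \<open>\<epsilon>\<^sub>m\<^sub>p\<close>.
  The sketch is unbiased with \<open>Var Y\<^sub>i \<le> \<parallel>h\<parallel>\<^sup>2 / b\<close>, and \<open>\<parallel>h\<parallel> \<le> \<parallel>v\<parallel> \<le> \<epsilon> \<surd>(0.9 t)\<close> because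
  \<open>\<widetilde>P\<close> is an orthogonal projection; hence the mean relative change is the intended
  \<open>\<delta>\<^sub>t + \<widetilde>\<delta>\<^sub>\<Phi>\<close> up to terms of order \<open>\<epsilon>\<^sub>m\<^sub>p \<epsilon>\<close>, \<open>\<epsilon>\<^sup>2\<close> and \<open>\<epsilon>\<^sup>2 \<surd>n / b\<close>.
  The variance of a quadratic in \<open>Y\<^sub>i\<close> is controlled by the variance and the fourth central
  moment of \<open>Y\<^sub>i\<close>; the latter follows from the tail bound of the sketch, summed over layers
  of constant width whose probabilities decay geometrically.  The tail bound at \<open>\<delta> = n\<^sup>-\<^sup>2\<close>, \<open>b \<ge> 1000 log\<^sup>2 n\<close> and a union bound
  give \<open>\<bar>Y\<^sub>i - h\<^sub>i\<bar> \<le> \<parallel>h\<parallel> / 10\<close> for all \<open>i\<close> with probability \<open>1 - 1/n\<close>, and then every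
  relative change is at most \<open>6\<epsilon>\<close>.  So the theorem holds with \<open>c = 1\<close>; the variance bound
  does not depend on the sample, so its event has probability one.\<close>

section \<open>Diagonal matrices and the Euclidean norm\<close>

lemma mat_diag_mult_vec:
  assumes "x \<in> carrier_vec n"
  shows "mat_diag n f *\<^sub>v x = Matrix.vec n (\<lambda>i. f i * x $ i)"
proof (rule eq_vecI)
  fix i assume "i < dim_vec (Matrix.vec n (\<lambda>i. f i * x $ i))"
  then have i: "i < n" by simp
  have "(mat_diag n f *\<^sub>v x) $ i = (\<Sum>j<n. (if i = j then f j else 0) * x $ j)"
    using i assms by (simp add: mat_diag_def scalar_prod_def row_def atLeast0LessThan)
  also have "\<dots> = f i * x $ i"
    by (simp add: if_distrib[where f="\<lambda>t. t * _"] i cong: if_cong)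
  finally show "(mat_diag n f *\<^sub>v x) $ i = Matrix.vec n (\<lambda>i. f i * x $ i) $ i"
    using i by simp
qed (simp add: mat_diag_def)

lemma mat_diag_mult_mat_vec_index:
  assumes "B \<in> carrier_mat n n" "x \<in> carrier_vec n" "i < n"
  shows "(mat_diag n f * B *\<^sub>v x) $ i = f i * (B *\<^sub>v x) $ i"
  using assms by (subst assoc_mult_mat_vec[OF mat_diag_dim]) (auto simp: mat_diag_mult_vec)

lemma dim_vsqrt [simp]: "dim_vec (vsqrt u) = dim_vec u"
  by (simp add: vsqrt_def)

lemma vdiag_carrier: "dim_vec u = n \<Longrightarrow> vdiag u \<in> carrier_mat n n"
  unfolding vdiag_def by simp

lemma vdiag_mult_vec:
  "x \<in> carrier_vec (dim_vec u) \<Longrightarrow> vdiag u *\<^sub>v x = Matrix.vec (dim_vec u) (\<lambda>i. u $ i * x $ i)"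
  unfolding vdiag_def by (rule mat_diag_mult_vec)

lemma vdiag_mult_vdiag:
  "dim_vec u = n \<Longrightarrow> dim_vec w = n \<Longrightarrow> vdiag u * vdiag w = mat_diag n (\<lambda>i. u $ i * w $ i)"
  unfolding vdiag_def by simp

lemma scalar_prod_vdiag_commute:
  assumes "dim_vec u = n" "x \<in> carrier_vec n" "y \<in> carrier_vec n"
  shows "x \<bullet> (vdiag u *\<^sub>v y) = (vdiag u *\<^sub>v x) \<bullet> y"
  using assms by (simp add: vdiag_mult_vec scalar_prod_def mult_ac)

lemma scalar_prod_vdiag_vsqrt:
  assumes "dim_vec w = n" "pos_vec w" "x \<in> carrier_vec n" "y \<in> carrier_vec n"
  shows "(vdiag (vsqrt w) *\<^sub>v x) \<bullet> (vdiag (vsqrt w) *\<^sub>v y) = x \<bullet> (vdiag w *\<^sub>v y)"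
proof -
  have "(vdiag (vsqrt w) *\<^sub>v x) \<bullet> (vdiag (vsqrt w) *\<^sub>v y)
      = (\<Sum>i<n. (sqrt (w $ i) * sqrt (w $ i)) * (x $ i * y $ i))"
    using assms by (simp add: vdiag_mult_vec vsqrt_def scalar_prod_def atLeast0LessThan mult_ac)
  also have "\<dots> = (\<Sum>i<n. w $ i * (x $ i * y $ i))"
    using assms(1,2) by (intro sum.cong) (auto simp: pos_vec_def less_imp_le)
  also have "\<dots> = x \<bullet> (vdiag w *\<^sub>v y)"
    using assms by (simp add: vdiag_mult_vec scalar_prod_def atLeast0LessThan mult_ac)
  finally show ?thesis .
qed

lemma L2_set_abs: "L2_set (\<lambda>i. \<bar>f i\<bar>) K = L2_set f K"
  by (simp add: L2_set_def)

lemma L2_set_abs_mono: "(\<And>i. i \<in> K \<Longrightarrow> \<bar>f i\<bar> \<le> g i) \<Longrightarrow> L2_set f K \<le> L2_set g K"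
  using L2_set_mono[of K "\<lambda>i. \<bar>f i\<bar>" g] by (simp add: L2_set_abs)

lemma L2_set_scaled_abs: "0 \<le> c \<Longrightarrow> L2_set (\<lambda>i. c * \<bar>f i\<bar>) K = c * L2_set f K"
  using L2_set_right_distrib[of c "\<lambda>i. \<bar>f i\<bar>" K] by (simp add: L2_set_abs)

lemma L2_set_add5_le:
  "L2_set (\<lambda>i. f1 i + f2 i + f3 i + f4 i + f5 i) K
    \<le> L2_set f1 K + L2_set f2 K + L2_set f3 K + L2_set f4 K + L2_set f5 K"
  using L2_set_triangle_ineq[of "\<lambda>i. f1 i + f2 i + f3 i + f4 i" f5 K]
    L2_set_triangle_ineq[of "\<lambda>i. f1 i + f2 i + f3 i" f4 K]
    L2_set_triangle_ineq[of "\<lambda>i. f1 i + f2 i" f3 K] L2_set_triangle_ineq[of f1 f2 K]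
  by linarith

lemma norm2_eq_L2_set: "norm2 u = L2_set (\<lambda>i. u $ i) {..<dim_vec u}"
  by (simp add: norm2_def L2_set_def)

lemma norm2_vec: "norm2 (Matrix.vec n f) = L2_set f {..<n}"
  unfolding norm2_eq_L2_set by (intro L2_set_cong) auto

lemma norm2_nonneg: "0 \<le> norm2 u"
  by (simp add: norm2_def sum_nonneg)

lemma norm2_smult: "norm2 (c \<cdot>\<^sub>v u) = \<bar>c\<bar> * norm2 u"
  by (simp add: norm2_def power_mult_distrib real_sqrt_mult flip: sum_distrib_left)

lemma abs_index_le_norm2: "i < dim_vec u \<Longrightarrow> \<bar>u $ i\<bar> \<le> norm2 u"
  using member_le_L2_set[of "{..<dim_vec u}" i "\<lambda>i. \<bar>u $ i\<bar>"]
  by (simp add: norm2_eq_L2_set L2_set_def)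

lemma norm2_pos:
  assumes "u \<in> carrier_vec n" "u \<noteq> 0\<^sub>v n"
  shows "0 < norm2 u"
proof -
  obtain i where "i < n" "u $ i \<noteq> 0"
    using assms by (metis carrier_vecD eq_vecI index_zero_vec(1,2))
  then have "0 < \<bar>u $ i\<bar>" "\<bar>u $ i\<bar> \<le> norm2 u"
    using assms(1) abs_index_le_norm2 by auto
  then show ?thesis by linarith
qed

lemma scalar_prod_self_eq_norm2: "(x :: real vec) \<bullet> x = (norm2 x)\<^sup>2"
  by (simp add: norm2_def scalar_prod_def power2_eq_square atLeast0LessThan sum_nonneg)

lemma scalar_prod_le_norm2:
  assumes "dim_vec (y :: real vec) = dim_vec x"
  shows "x \<bullet> y \<le> norm2 x * norm2 y"
proof -
  have "x \<bullet> y = (\<Sum>i<dim_vec x. x $ i * y $ i)"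
    using assms by (simp add: scalar_prod_def atLeast0LessThan)
  also have "\<dots> \<le> (\<Sum>i<dim_vec x. \<bar>x $ i\<bar> * \<bar>y $ i\<bar>)"
    by (intro sum_mono) (metis abs_ge_self abs_mult)
  also have "\<dots> \<le> norm2 x * norm2 y"
    using L2_set_mult_ineq assms by (simp add: norm2_eq_L2_set)
  finally show ?thesis .
qed

section \<open>The weighted projection\<close>

lemma full_row_rank_transpose_inj:
  assumes fr: "full_row_rank d n A" and x: "x \<in> carrier_vec d"
    and z: "transpose_mat A *\<^sub>v x = 0\<^sub>v n"
  shows "x = 0\<^sub>v d"
proof -
  interpret vs: vec_space "TYPE(real)" d .
  have A: "A \<in> carrier_mat d n" and rk: "vs.rank A = d"
    using fr unfolding full_row_rank_def by auto
  obtain S where Sfin: "finite S" and Smax: "maximal S (\<lambda>T. T \<subseteq> set (cols A) \<and> vs.lin_indpt T)"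
    using maximal_exists[of "(\<lambda>T. T \<subseteq> set (cols A) \<and> vs.lin_indpt T)" "card (set (cols A))" "{}"]
    by (meson List.finite_set card_mono empty_iff empty_subsetI vs.finite_lin_indpt2 rev_finite_subset)
  have cardS: "card S = d" using vs.rank_card_indpt[OF A Smax] rk by simp
  have SA: "S \<subseteq> set (cols A)" and Sli: "vs.lin_indpt S" using Smax unfolding maximal_def by auto
  obtain L where L: "set L = S" "distinct L" using finite_distinct_list[OF Sfin] by blast
  have lenL: "length L = d" using L cardS distinct_card by fastforce
  have Lcar: "set L \<subseteq> carrier_vec d" using L SA cols_dim A by blast
  define C where "C = mat_of_cols d L"
  have C: "C \<in> carrier_mat d d" unfolding C_def using lenL mat_of_cols_carrier(1) by metis
  have colsC: "cols C = L" unfolding C_def using Lcar by simp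
  have "vs.rank C = d" using vs.lin_indpt_full_rank[OF C] colsC L Sli by simp
  then have "Determinant.det (transpose_mat C) \<noteq> 0"
    using vs.det_rank_iff[OF C] det_transpose[OF C] by simp
  moreover have "transpose_mat C *\<^sub>v x = 0\<^sub>v d"
  proof (rule eq_vecI)
    fix j assume "j < dim_vec (0\<^sub>v d :: real vec)"
    then have j: "j < d" by simp
    have "L ! j \<in> set (cols A)" using L SA j lenL nth_mem by blast
    then obtain k where k: "k < n" "L ! j = col A k" using A
      by (metis cols_length cols_nth in_set_conv_nth carrier_matD(2))
    have "col A k \<bullet> x = 0" using z k A by (metis index_mult_mat_vec index_transpose_mat(2)
        index_zero_vec(1) carrier_matD(2) row_transpose)
    moreover have "col C j = L ! j" using colsC C j by (metis cols_nth carrier_matD(2))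
    ultimately show "(transpose_mat C *\<^sub>v x) $ j = (0\<^sub>v d :: real vec) $ j"
      using k j C by simp
  qed (use C in simp)
  ultimately show ?thesis
    using det_0_iff_vec_prod_zero_field[of "transpose_mat C" d] C x by auto
qed

lemma weighted_gram_quadratic_form:
  assumes A: "A \<in> carrier_mat d n" and w: "dim_vec w = n" and x: "x \<in> carrier_vec d"
  shows "x \<bullet> (A * vdiag w * transpose_mat A *\<^sub>v x) = (\<Sum>i<n. w $ i * ((transpose_mat A *\<^sub>v x) $ i)\<^sup>2)"
proof -
  define z where "z = transpose_mat A *\<^sub>v x"
  have z: "z \<in> carrier_vec n" unfolding z_def using A x by simp
  have W: "vdiag w \<in> carrier_mat n n" using w by (rule vdiag_carrier)
  have "A * vdiag w * transpose_mat A *\<^sub>v x = A *\<^sub>v (vdiag w *\<^sub>v z)"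
    unfolding z_def using A W x by (simp add: assoc_mult_mat_vec[of _ d n _ d])
  moreover have "z \<bullet> (vdiag w *\<^sub>v z) = x \<bullet> (A *\<^sub>v (vdiag w *\<^sub>v z))"
    unfolding z_def by (rule transpose_vec_mult_scalar[OF A _ x]) (use W z z_def in simp)
  ultimately have "x \<bullet> (A * vdiag w * transpose_mat A *\<^sub>v x) = z \<bullet> (vdiag w *\<^sub>v z)"
    by simp
  also have "\<dots> = (\<Sum>i<n. w $ i * (z $ i)\<^sup>2)"
    using z w by (simp add: vdiag_mult_vec scalar_prod_def atLeast0LessThan power2_eq_square mult_ac)
  finally show ?thesis unfolding z_def .
qed

lemma weighted_gram_det_nonzero:
  assumes fr: "full_row_rank d n A" and w: "w \<in> carrier_vec n" "pos_vec w"
  shows "Determinant.det (A * vdiag w * transpose_mat A) \<noteq> 0"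
proof
  have A: "A \<in> carrier_mat d n" using fr unfolding full_row_rank_def by auto
  have G: "A * vdiag w * transpose_mat A \<in> carrier_mat d d"
    using A vdiag_carrier[of w n] w by auto
  assume "Determinant.det (A * vdiag w * transpose_mat A) = 0"
  then obtain x where x: "x \<in> carrier_vec d" "x \<noteq> 0\<^sub>v d" "A * vdiag w * transpose_mat A *\<^sub>v x = 0\<^sub>v d"
    using det_0_iff_vec_prod_zero_field[OF G] by blast
  define z where "z = transpose_mat A *\<^sub>v x"
  have "(\<Sum>i<n. w $ i * (z $ i)\<^sup>2) = 0"
    using weighted_gram_quadratic_form[OF A _ x(1), of w] x w unfolding z_def by simp
  then have "\<forall>i<n. w $ i * (z $ i)\<^sup>2 = 0"
    using w by (subst (asm) sum_nonneg_eq_0_iff) (auto simp: pos_vec_def less_imp_le)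
  then have "z = 0\<^sub>v n"
    using w A unfolding z_def pos_vec_def by (intro eq_vecI) (auto, metis less_irrefl)
  then show False using full_row_rank_transpose_inj[OF fr x(1)] x(2) unfolding z_def by simp
qed

lemma weighted_gram_minv:
  assumes fr: "full_row_rank d n A" and w: "w \<in> carrier_vec n" "pos_vec w"
  defines "G \<equiv> A * vdiag w * transpose_mat A"
  shows "minv G \<in> carrier_mat d d" "G * minv G = 1\<^sub>m d"
proof -
  have G: "G \<in> carrier_mat d d"
    using fr vdiag_carrier[of w n] w unfolding G_def full_row_rank_def by auto
  have "G \<in> Units (ring_mat TYPE(real) d ())"
    using det_non_zero_imp_unit[OF G _, of "()"] weighted_gram_det_nonzero[OF assms(1-3)]
    unfolding G_def by blast
  then obtain B where "mat_inverse G = Some B"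
    using mat_inverse(1)[OF G, of "()"] by (cases "mat_inverse G") auto
  then show "minv G \<in> carrier_mat d d" "G * minv G = 1\<^sub>m d"
    using mat_inverse(2)[OF G] unfolding minv_def by auto
qed

lemma projP_factor:
  assumes "full_row_rank d n A" "w \<in> carrier_vec n" "pos_vec w"
  defines "D \<equiv> vdiag (vsqrt w)" and "B \<equiv> minv (A * vdiag w * transpose_mat A)"
  shows "projP A w = D * transpose_mat A * B * A * D" "D \<in> carrier_mat n n" "B \<in> carrier_mat d d"
    "A \<in> carrier_mat d n"
  using assms weighted_gram_minv(1)[OF assms(1-3)] vdiag_carrier[of "vsqrt w" n]
  unfolding projP_def full_row_rank_def by auto

lemma projP_carrier:
  assumes "full_row_rank d n A" "w \<in> carrier_vec n" "pos_vec w"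
  shows "projP A w \<in> carrier_mat n n"
proof -
  note P = projP_factor[OF assms]
  have AT: "transpose_mat A \<in> carrier_mat n d" using P(4) by simp
  show ?thesis
    unfolding P(1) using mult_carrier_mat[OF mult_carrier_mat[OF mult_carrier_mat[OF
        mult_carrier_mat[OF P(2) AT] P(3)] P(4)] P(2)] .
qed

lemma weighted_gram_minv_mult_vec:
  assumes fr: "full_row_rank d n A" and w: "w \<in> carrier_vec n" "pos_vec w"
    and u: "u \<in> carrier_vec d"
  shows "A *\<^sub>v (vdiag w *\<^sub>v (transpose_mat A *\<^sub>v (minv (A * vdiag w * transpose_mat A) *\<^sub>v u))) = u"
proof -
  define B where "B = minv (A * vdiag w * transpose_mat A)"
  have A: "A \<in> carrier_mat d n" and AT: "transpose_mat A \<in> carrier_mat n d"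
    and W: "vdiag w \<in> carrier_mat n n" and B: "B \<in> carrier_mat d d"
    using fr w vdiag_carrier[of w n] weighted_gram_minv(1)[OF fr w]
    unfolding full_row_rank_def B_def by auto
  have "A *\<^sub>v (vdiag w *\<^sub>v (transpose_mat A *\<^sub>v (B *\<^sub>v u)))
      = (A * vdiag w * transpose_mat A * B) *\<^sub>v u"
    using A AT W B u by (simp add: assoc_mult_mat_vec[of _ d n _ d] assoc_mult_mat_vec[of _ n n _ d]
        assoc_mult_mat_vec[of _ d d _ d])
  also have "\<dots> = u" using weighted_gram_minv(2)[OF fr w] u unfolding B_def by simp
  finally show ?thesis unfolding B_def .
qed

text \<open>\<open>projP A w\<close> is the orthogonal projection onto the range of \<open>W\<^sup>1\<^sup>/\<^sup>2 A\<^sup>T\<close>.\<close>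

lemma projP_inner_self:
  assumes fr: "full_row_rank d n A" and w: "w \<in> carrier_vec n" "pos_vec w"
    and v: "v \<in> carrier_vec n"
  shows "(projP A w *\<^sub>v v) \<bullet> (projP A w *\<^sub>v v) = v \<bullet> (projP A w *\<^sub>v v)"
proof -
  define D where "D = vdiag (vsqrt w)"
  define B where "B = minv (A * vdiag w * transpose_mat A)"
  note P = projP_factor[OF fr w, folded D_def B_def]
  have W: "vdiag w \<in> carrier_mat n n" using w vdiag_carrier[of w n] by simp
  have AT: "transpose_mat A \<in> carrier_mat n d" using P(4) by simp
  define u where "u = A *\<^sub>v (D *\<^sub>v v)"
  define g where "g = B *\<^sub>v u"
  define p where "p = transpose_mat A *\<^sub>v g"
  have u: "u \<in> carrier_vec d" and g: "g \<in> carrier_vec d" and p: "p \<in> carrier_vec n"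
    using P v AT unfolding u_def g_def p_def by auto
  have c1: "D * transpose_mat A \<in> carrier_mat n d" and c2: "D * transpose_mat A * B \<in> carrier_mat n d"
    and c3: "D * transpose_mat A * B * A \<in> carrier_mat n n" and Dv: "D *\<^sub>v v \<in> carrier_vec n"
    using P AT v by auto
  have "projP A w *\<^sub>v v = (D * transpose_mat A * B * A) *\<^sub>v (D *\<^sub>v v)"
    unfolding P(1) using c3 P(2) v by (rule assoc_mult_mat_vec)
  also have "\<dots> = (D * transpose_mat A * B) *\<^sub>v u"
    unfolding u_def using c2 P(4) Dv by (rule assoc_mult_mat_vec)
  also have "\<dots> = (D * transpose_mat A) *\<^sub>v g"
    unfolding g_def using c1 P(3) u by (rule assoc_mult_mat_vec)
  also have "\<dots> = D *\<^sub>v p"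
    unfolding p_def using P(2) AT g by (rule assoc_mult_mat_vec)
  finally have Pv: "projP A w *\<^sub>v v = D *\<^sub>v p" .
  have "(D *\<^sub>v p) \<bullet> (D *\<^sub>v p) = p \<bullet> (vdiag w *\<^sub>v p)"
    unfolding D_def using w p by (intro scalar_prod_vdiag_vsqrt) auto
  also have "\<dots> = g \<bullet> u"
    using transpose_vec_mult_scalar[OF P(4), of "vdiag w *\<^sub>v p" g] W p g
      weighted_gram_minv_mult_vec[OF fr w u]
    unfolding p_def g_def B_def by simp
  also have "\<dots> = (D *\<^sub>v v) \<bullet> p"
    unfolding u_def p_def using transpose_vec_mult_scalar[OF P(4), of "D *\<^sub>v v" g] P v g
    by (simp add: comm_scalar_prod[of _ n])
  also have "\<dots> = v \<bullet> (D *\<^sub>v p)"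
    unfolding D_def using w v p by (intro scalar_prod_vdiag_commute[symmetric]) auto
  finally show ?thesis unfolding Pv .
qed

lemma norm2_projP_le:
  assumes "full_row_rank d n A" "w \<in> carrier_vec n" "pos_vec w" "v \<in> carrier_vec n"
  shows "norm2 (projP A w *\<^sub>v v) \<le> norm2 v"
proof -
  have "dim_vec (projP A w *\<^sub>v v) = dim_vec v"
    using projP_carrier[OF assms(1-3)] assms(4) by simp
  then have "(norm2 (projP A w *\<^sub>v v))\<^sup>2 \<le> norm2 v * norm2 (projP A w *\<^sub>v v)"
    using projP_inner_self[OF assms] scalar_prod_le_norm2
    by (metis scalar_prod_self_eq_norm2)
  then show ?thesis
    using norm2_nonneg[of v] norm2_nonneg[of "projP A w *\<^sub>v v"]
    by (metis mult_right_le_imp_le power2_eq_square le_less not_le mult_zero_right mult_le_0_iff)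
qed

section \<open>Coordinates of the sketched step\<close>

lemma delta_mu_carrier: "mu \<in> carrier_vec n \<Longrightarrow> delta_mu n eps lam t mu \<in> carrier_vec n"
  by (simp add: delta_mu_def delta_t_def delta_Phi_def Let_def gradPhi_def)

lemma sketch_scaling_dim:
  assumes "dim_vec w = n" "dim_vec mu = n"
  shows "dim_vec (xtil w mu) = n" "dim_vec (stil w mu) = n"
    "dim_vec (vinv (vsqrt (vmul (xtil w mu) (stil w mu)))) = n"
  using assms by (simp_all add: xtil_def stil_def vinv_def vmul_def vdivide_def)

lemma sketch_scaling_index:
  assumes "dim_vec w = n" "dim_vec mu = n" "0 < w $ i" "0 < mu $ i" "i < n"
  defines "q \<equiv> vinv (vsqrt (vmul (xtil w mu) (stil w mu)))"
  shows "q $ i = 1 / sqrt (mu $ i)" "xtil w mu $ i * q $ i = sqrt (w $ i)"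
    "stil w mu $ i * q $ i = 1 / sqrt (w $ i)"
proof -
  have x: "xtil w mu $ i = sqrt (w $ i * mu $ i)" and s: "stil w mu $ i = sqrt (mu $ i / w $ i)"
    using assms by (simp_all add: xtil_def stil_def vmul_def vdivide_def vsqrt_def)
  have "xtil w mu $ i * stil w mu $ i = mu $ i"
    unfolding x s real_sqrt_mult[symmetric] using assms(3,4) by (simp add: real_sqrt_mult_self)
  then show q: "q $ i = 1 / sqrt (mu $ i)"
    using assms sketch_scaling_dim[OF assms(1,2)] by (simp add: vinv_def vsqrt_def vmul_def)
  show "xtil w mu $ i * q $ i = sqrt (w $ i)" "stil w mu $ i * q $ i = 1 / sqrt (w $ i)"
    unfolding q x s using assms(3,4) by (simp_all add: real_sqrt_mult real_sqrt_divide)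
qed

lemma sketch_scaling_mult_delta_mu:
  assumes dim: "dim_vec w = n" "dim_vec mu = n" and pos: "pos_vec w" "pos_vec mu"
  shows "vdiag (vinv (vsqrt (vmul (xtil w mu) (stil w mu)))) *\<^sub>v delta_mu n eps lam t mu
    = Matrix.vec n (\<lambda>j. delta_mu n eps lam t mu $ j / sqrt (mu $ j))"
proof -
  define q where "q = vinv (vsqrt (vmul (xtil w mu) (stil w mu)))"
  have dm: "delta_mu n eps lam t mu \<in> carrier_vec n"
    using dim(2) by (intro delta_mu_carrier carrier_vecI)
  have dq: "dim_vec q = n" using sketch_scaling_dim(3)[OF dim] unfolding q_def .
  have "vdiag q *\<^sub>v delta_mu n eps lam t mu = Matrix.vec n (\<lambda>j. q $ j * delta_mu n eps lam t mu $ j)"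
    using vdiag_mult_vec[of "delta_mu n eps lam t mu" q] dm dq by simp
  also have "\<dots> = Matrix.vec n (\<lambda>j. delta_mu n eps lam t mu $ j / sqrt (mu $ j))"
  proof (rule eq_vecI)
    fix j assume "j < dim_vec (Matrix.vec n (\<lambda>j. delta_mu n eps lam t mu $ j / sqrt (mu $ j)))"
    then have j: "j < n" by simp
    then have "q $ j = 1 / sqrt (mu $ j)"
      using sketch_scaling_index(1)[OF dim _ _ j] pos dim unfolding q_def pos_vec_def by auto
    then show "Matrix.vec n (\<lambda>j. q $ j * delta_mu n eps lam t mu $ j) $ j
        = Matrix.vec n (\<lambda>j. delta_mu n eps lam t mu $ j / sqrt (mu $ j)) $ j"
      using j by simp
  qed simp
  finally show ?thesis unfolding q_def .
qed

lemma hat_dx_index: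
  fixes eps lam t :: real
  assumes fr: "full_row_rank d n A" and w: "w \<in> carrier_vec n" "pos_vec w"
    and mu: "mu \<in> carrier_vec n" "pos_vec mu" and R: "R \<in> carrier_mat b n" and i: "i < n"
  defines "v \<equiv> Matrix.vec n (\<lambda>j. delta_mu n eps lam t mu $ j / sqrt (mu $ j))"
  shows "hat_dx n eps lam t A w mu R $ i
    = sqrt (w $ i) * (v $ i - (transpose_mat R * R *\<^sub>v (projP A w *\<^sub>v v)) $ i)"
proof -
  define q where "q = vinv (vsqrt (vmul (xtil w mu) (stil w mu)))"
  define P where "P = projP A w"
  have dim: "dim_vec w = n" "dim_vec mu = n" using w mu by auto
  note dims = sketch_scaling_dim[OF dim, folded q_def]
  have Q: "vdiag q \<in> carrier_mat n n" and X: "vdiag (xtil w mu) \<in> carrier_mat n n"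
    using dims by (auto intro: vdiag_carrier)
  have PC: "P \<in> carrier_mat n n" unfolding P_def using fr w by (rule projP_carrier)
  have RR: "transpose_mat R * R \<in> carrier_mat n n" using R by simp
  have T: "1\<^sub>m n - transpose_mat R * R * P \<in> carrier_mat n n"
    using mult_carrier_mat[OF RR PC] by (simp add: minus_carrier_mat)
  have dm: "delta_mu n eps lam t mu \<in> carrier_vec n" using mu by (simp add: delta_mu_carrier)
  have vC: "v \<in> carrier_vec n" unfolding v_def by simp
  have "hat_dx n eps lam t A w mu R
      = mat_diag n (\<lambda>j. xtil w mu $ j * q $ j) * (1\<^sub>m n - transpose_mat R * R * P) *\<^sub>v v"
    unfolding hat_dx_def Let_def q_def[symmetric] P_def[symmetric] v_def
      sketch_scaling_mult_delta_mu[OF dim w(2) mu(2), folded q_def, symmetric]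
    using X Q dm dims
    by (simp add: vdiag_mult_vdiag assoc_mult_mat_vec[OF mult_carrier_mat[OF mat_diag_dim T] Q dm])
  moreover have "(1\<^sub>m n - transpose_mat R * R * P) *\<^sub>v v = v - (transpose_mat R * R) *\<^sub>v (P *\<^sub>v v)"
    using minus_mult_distrib_mat_vec[OF one_carrier_mat mult_carrier_mat[OF RR PC] vC]
      assoc_mult_mat_vec[OF RR PC vC] vC
    by simp
  moreover have "xtil w mu $ i * q $ i = sqrt (w $ i)"
    using sketch_scaling_index(2)[OF dim _ _ i] w mu dim i unfolding q_def pos_vec_def by auto
  ultimately show ?thesis
    unfolding P_def[symmetric] using mat_diag_mult_mat_vec_index[OF T vC i] i carrier_matD[OF RR]
    by simp
qed

lemma hat_ds_index:
  fixes eps lam t :: real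
  assumes fr: "full_row_rank d n A" and w: "w \<in> carrier_vec n" "pos_vec w"
    and mu: "mu \<in> carrier_vec n" "pos_vec mu" and R: "R \<in> carrier_mat b n" and i: "i < n"
  defines "v \<equiv> Matrix.vec n (\<lambda>j. delta_mu n eps lam t mu $ j / sqrt (mu $ j))"
  shows "hat_ds n eps lam t A w mu R $ i
    = (transpose_mat R * R *\<^sub>v (projP A w *\<^sub>v v)) $ i / sqrt (w $ i)"
proof -
  define q where "q = vinv (vsqrt (vmul (xtil w mu) (stil w mu)))"
  define P where "P = projP A w"
  have dim: "dim_vec w = n" "dim_vec mu = n" using w mu by auto
  note dims = sketch_scaling_dim[OF dim, folded q_def]
  have Q: "vdiag q \<in> carrier_mat n n" and S: "vdiag (stil w mu) \<in> carrier_mat n n"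
    using dims by (auto intro: vdiag_carrier)
  have SQ: "vdiag (stil w mu) * vdiag q \<in> carrier_mat n n" using S Q by simp
  have PC: "P \<in> carrier_mat n n" unfolding P_def using fr w by (rule projP_carrier)
  have RT: "transpose_mat R \<in> carrier_mat n b" using R by simp
  have SQR: "vdiag (stil w mu) * vdiag q * transpose_mat R * R \<in> carrier_mat n n"
    using SQ RT R by simp
  have dm: "delta_mu n eps lam t mu \<in> carrier_vec n" using mu by (simp add: delta_mu_carrier)
  have vC: "v \<in> carrier_vec n" and PvC: "P *\<^sub>v v \<in> carrier_vec n"
    and RPv: "R *\<^sub>v (P *\<^sub>v v) \<in> carrier_vec b" unfolding v_def using PC R by auto
  have "hat_ds n eps lam t A w mu R
      = (vdiag (stil w mu) * vdiag q * transpose_mat R * R * P) *\<^sub>v (vdiag q *\<^sub>v delta_mu n eps lam t mu)"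
    unfolding hat_ds_def Let_def q_def[symmetric] P_def[symmetric]
    using mult_carrier_mat[OF SQR PC] Q dm by (rule assoc_mult_mat_vec)
  also have "\<dots> = (vdiag (stil w mu) * vdiag q * transpose_mat R * R) *\<^sub>v (P *\<^sub>v v)"
    unfolding v_def sketch_scaling_mult_delta_mu[OF dim w(2) mu(2), folded q_def]
    using SQR PC vC unfolding v_def by (rule assoc_mult_mat_vec)
  also have "\<dots> = (vdiag (stil w mu) * vdiag q * transpose_mat R) *\<^sub>v (R *\<^sub>v (P *\<^sub>v v))"
    using mult_carrier_mat[OF SQ RT] R PvC by (rule assoc_mult_mat_vec)
  also have "\<dots> = (vdiag (stil w mu) * vdiag q) *\<^sub>v (transpose_mat R *\<^sub>v (R *\<^sub>v (P *\<^sub>v v)))"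
    using SQ RT RPv by (rule assoc_mult_mat_vec)
  also have "\<dots> = mat_diag n (\<lambda>j. stil w mu $ j * q $ j) *\<^sub>v ((transpose_mat R * R) *\<^sub>v (P *\<^sub>v v))"
    using RT R PvC dims by (simp add: vdiag_mult_vdiag)
  moreover have "stil w mu $ i * q $ i = 1 / sqrt (w $ i)"
    using sketch_scaling_index(3)[OF dim _ _ i] w mu dim i unfolding q_def pos_vec_def by auto
  ultimately show ?thesis
    unfolding P_def[symmetric] using i R PvC by (simp add: mat_diag_mult_vec)
qed

lemma mu_new_index:
  fixes eps lam t :: real
  assumes "full_row_rank d n A" "w \<in> carrier_vec n" "pos_vec w" "mu \<in> carrier_vec n" "pos_vec mu"
    "R \<in> carrier_mat b n" "i < n" "xb \<in> carrier_vec n" "sb \<in> carrier_vec n"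
  defines "v \<equiv> Matrix.vec n (\<lambda>j. delta_mu n eps lam t mu $ j / sqrt (mu $ j))"
  defines "y \<equiv> (transpose_mat R * R *\<^sub>v (projP A w *\<^sub>v v)) $ i"
  shows "mu_new n eps lam t A w mu xb sb R $ i
    = (xb $ i + sqrt (w $ i) * (v $ i - y)) * (sb $ i + y / sqrt (w $ i))"
proof -
  have "dim_vec (hat_dx n eps lam t A w mu R) = n" "dim_vec (hat_ds n eps lam t A w mu R) = n"
    using assms(2,4) sketch_scaling_dim[of w n mu]
    by (auto simp: hat_dx_def hat_ds_def Let_def vdiag_def mat_diag_def)
  then have "mu_new n eps lam t A w mu xb sb R $ i
      = (xb $ i + hat_dx n eps lam t A w mu R $ i) * (sb $ i + hat_ds n eps lam t A w mu R $ i)"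
    using assms(7-9) by (simp add: mu_new_def vmul_def)
  then show ?thesis
    unfolding hat_dx_index[OF assms(1-7)] hat_ds_index[OF assms(1-7)] v_def y_def .
qed

section \<open>Moments and tails of a real random variable\<close>

lemma ln_le_half: assumes "(2::real) \<le> x" shows "ln x \<le> x / 2"
proof -
  have "ln x = 2 * ln (sqrt x)" using assms by (simp add: ln_sqrt)
  also have "\<dots> \<le> 2 * (sqrt x - 1)" using assms ln_le_minus_one[of "sqrt x"] by simp
  also have "\<dots> \<le> x / 2"
    using assms sum_squares_ge_zero[of "sqrt x - 2" 0] by (simp add: power2_eq_square algebra_simps)
  finally show ?thesis .
qed

lemma one_plus_pow4_exp_le: "(1 + real j) ^ 4 * exp (- 3 * real j) \<le> 16 * exp (- real j)"
proof -
  have "1 + real j \<le> 2 * exp (real j / 2)" using exp_ge_add_one_self[of "real j / 2"] by linarith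
  then have "(1 + real j) ^ 4 \<le> (2 * exp (real j / 2)) ^ 4" by (intro power_mono) auto
  also have "\<dots> = 16 * exp (2 * real j)"
    by (simp add: power_mult_distrib exp_of_nat_mult[symmetric] power4_eq_xxxx exp_add[symmetric])
  finally have "(1 + real j) ^ 4 * exp (- 3 * real j) \<le> 16 * exp (2 * real j) * exp (- 3 * real j)"
    by (intro mult_right_mono) auto
  also have "\<dots> = 16 * exp (- real j)" by (simp add: exp_add[symmetric])
  finally show ?thesis .
qed

lemma grid_bracket:
  fixes c d z :: real
  assumes "0 < d" "c < z"
  obtains k :: nat where "c + d * real k < z" "z \<le> c + d * real (Suc k)"
proof
  define q where "q = (z - c) / d"
  have q: "0 < q" unfolding q_def using assms by simp
  define k where "k = nat (\<lceil>q\<rceil> - 1)"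
  have k: "real k = of_int \<lceil>q\<rceil> - 1" unfolding k_def using q by simp
  have "real k < q" "q \<le> real (Suc k)" using k ceiling_correct[of q] by linarith+
  then show "c + d * real k < z" "z \<le> c + d * real (Suc k)"
    unfolding q_def using assms by (simp_all add: field_simps)
qed

text \<open>Layer-cake bound: \<open>z\<^sup>4\<close> is dominated on \<open>\<bar>z\<bar> \<le> c\<close> by \<open>c\<^sup>2 z\<^sup>2\<close> and on the layer
  \<open>c + d k < \<bar>z\<bar> \<le> c + d (k + 1)\<close> by \<open>(c + d (k + 1))\<^sup>4\<close>.\<close>

lemma ennreal_power4_le_layers:
  fixes z c d :: real
  assumes "0 \<le> c" "0 < d"
  shows "ennreal (z ^ 4) \<le> ennreal (c\<^sup>2 * z\<^sup>2)
    + (\<Sum>j. ennreal ((c + d * real (Suc j)) ^ 4) * indicator {x. c + d * real j < \<bar>x\<bar>} z)"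
proof (cases "\<bar>z\<bar> \<le> c")
  case True
  then have "z\<^sup>2 * z\<^sup>2 \<le> c\<^sup>2 * z\<^sup>2"
    using power_mono[of "\<bar>z\<bar>" c 2] by (intro mult_right_mono) auto
  then have "ennreal (z ^ 4) \<le> ennreal (c\<^sup>2 * z\<^sup>2)"
    by (intro ennreal_leI) (simp add: power4_eq_xxxx power2_eq_square mult.assoc)
  then show ?thesis by (rule order_trans) simp
next
  case False
  then obtain k where k: "c + d * real k < \<bar>z\<bar>" "\<bar>z\<bar> \<le> c + d * real (Suc k)"
    using grid_bracket[OF assms(2)] by (metis not_le)
  have "z ^ 4 \<le> (c + d * real (Suc k)) ^ 4"
    using power_mono[OF k(2), of 4] by (simp add: power_even_abs_numeral)
  define F where "F j = ennreal ((c + d * real (Suc j)) ^ 4) * indicator {x. c + d * real j < \<bar>x\<bar>} z"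
    for j
  have "ennreal (z ^ 4) \<le> F k"
    unfolding F_def using k(1) \<open>z ^ 4 \<le> _\<close> by (simp add: ennreal_leI)
  also have "\<dots> = sum F {k}" by simp
  also have "\<dots> \<le> suminf F" by (intro sum_le_suminf summableI) auto
  finally show ?thesis unfolding F_def by (rule order_trans) (simp add: add_increasing)
qed

lemma suminf_layers_le:
  fixes c d q :: real
  assumes "0 \<le> c" "0 \<le> d" "0 \<le> q"
  shows "(\<Sum>j. ennreal ((c + d * real (Suc j)) ^ 4 * (q * exp (- 3 * real j))))
    \<le> ennreal (32 * q * (c + d) ^ 4)"
proof -
  define K where "K = 16 * q * (c + d) ^ 4"
  have K: "0 \<le> K" unfolding K_def using assms by simp
  have geom: "summable (\<lambda>j. exp (-1::real) ^ j)" by (simp add: summable_geometric)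
  have layer: "(c + d * real (Suc j)) ^ 4 * (q * exp (- 3 * real j)) \<le> K * exp (-1) ^ j" for j
  proof -
    have "c + d * real (Suc j) \<le> (c + d) * (1 + real j)" using assms by (simp add: algebra_simps)
    then have "(c + d * real (Suc j)) ^ 4 \<le> (c + d) ^ 4 * (1 + real j) ^ 4"
      using assms by (metis power_mono power_mult_distrib add_nonneg_nonneg of_nat_0_le_iff
          mult_nonneg_nonneg)
    then have "(c + d * real (Suc j)) ^ 4 * (q * exp (- 3 * real j))
        \<le> (c + d) ^ 4 * (1 + real j) ^ 4 * (q * exp (- 3 * real j))"
      using assms by (intro mult_right_mono) auto
    also have "\<dots> = q * (c + d) ^ 4 * ((1 + real j) ^ 4 * exp (- 3 * real j))"
      by (simp add: mult_ac)
    also have "\<dots> \<le> q * (c + d) ^ 4 * (16 * exp (- real j))"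
      using assms one_plus_pow4_exp_le by (intro mult_left_mono) auto
    finally show ?thesis unfolding K_def by (simp add: exp_of_nat_mult[symmetric] mult_ac)
  qed
  have "(\<Sum>j. ennreal ((c + d * real (Suc j)) ^ 4 * (q * exp (- 3 * real j))))
      \<le> (\<Sum>j. ennreal (K * exp (-1) ^ j))"
    using layer by (intro suminf_le ennreal_leI summableI) auto
  also have "\<dots> = ennreal (K * (1 / (1 - exp (-1))))"
    using geom K by (simp add: suminf_ennreal2 suminf_mult suminf_geometric)
  also have "\<dots> \<le> ennreal (32 * q * (c + d) ^ 4)"
  proof (intro ennreal_leI)
    have "exp (-1::real) \<le> 1 / 2"
      using exp_ge_add_one_self[of 1] by (simp add: exp_minus field_simps)
    then have "1 / (1 - exp (-1::real)) \<le> 2" by (simp add: divide_le_eq)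
    then show "K * (1 / (1 - exp (-1))) \<le> 32 * q * (c + d) ^ 4"
      using mult_left_mono[OF _ K] unfolding K_def by fastforce
  qed
  finally show ?thesis .
qed

lemma fourth_moment_constant_le:
  fixes \<theta> N :: real
  assumes "0 \<le> \<theta>" "2 \<le> N"
  shows "(3 * \<theta> * ln N)\<^sup>2 * \<theta>\<^sup>2 + 32 * (1 / N\<^sup>2) * (3 * \<theta> * ln N + 3 * \<theta>) ^ 4
    \<le> 25400 * \<theta> ^ 4 * (ln N)\<^sup>2"
proof -
  define L where "L = ln N"
  have L23: "2/3 \<le> L"
    unfolding L_def using ln2_ge_two_thirds ln_le_cancel_iff assms(2) by (smt (verit) ln_mono)
  have LN: "L \<le> N / 2" unfolding L_def using assms(2) by (rule ln_le_half)
  have "(3 * L + 3) ^ 4 \<le> (15/2 * L) ^ 4" using L23 by (intro power_mono) auto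
  then have "(3 * L + 3) ^ 4 \<le> 50625/16 * L\<^sup>2 * L\<^sup>2"
    by (simp add: power_mult_distrib power4_eq_xxxx power2_eq_square mult_ac)
  also have "\<dots> \<le> 50625/16 * L\<^sup>2 * (N\<^sup>2 / 4)"
    using power_mono[OF LN, of 2] L23 by (intro mult_left_mono) (auto simp: power_divide)
  finally have "(3 * L + 3) ^ 4 / N\<^sup>2 \<le> 50625/64 * L\<^sup>2"
    using assms(2) by (simp add: divide_le_eq)
  then have "32 * \<theta> ^ 4 * ((3 * L + 3) ^ 4 / N\<^sup>2) \<le> 32 * \<theta> ^ 4 * (50625/64 * L\<^sup>2)"
    using assms(1) by (intro mult_left_mono) auto
  moreover have "32 * (1 / N\<^sup>2) * (3 * \<theta> * L + 3 * \<theta>) ^ 4 = 32 * \<theta> ^ 4 * ((3 * L + 3) ^ 4 / N\<^sup>2)"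
  proof -
    have "3 * \<theta> * L + 3 * \<theta> = \<theta> * (3 * L + 3)" by (simp add: algebra_simps)
    then show ?thesis by (simp add: power_mult_distrib)
  qed
  moreover have "(3 * \<theta> * L)\<^sup>2 * \<theta>\<^sup>2 = 9 * (\<theta> ^ 4 * L\<^sup>2)"
    by (simp add: power_mult_distrib power2_eq_square power4_eq_xxxx)
  moreover have "32 * \<theta> ^ 4 * (50625/64 * L\<^sup>2) = 50625/2 * (\<theta> ^ 4 * L\<^sup>2)" by simp
  moreover have "0 \<le> \<theta> ^ 4 * L\<^sup>2" using assms(1) by simp
  moreover have "25400 * \<theta> ^ 4 * L\<^sup>2 = 25400 * (\<theta> ^ 4 * L\<^sup>2)" by simp
  ultimately show ?thesis unfolding L_def[symmetric] by linarith
qed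

context prob_space
begin

lemma integral_quadratic:
  fixes Y :: "'a \<Rightarrow> real"
  assumes "integrable M Y" "integrable M (\<lambda>\<omega>. (Y \<omega>)\<^sup>2)"
  shows "integrable M (\<lambda>\<omega>. a + b * Y \<omega> + c * (Y \<omega>)\<^sup>2)"
    "expectation (\<lambda>\<omega>. a + b * Y \<omega> + c * (Y \<omega>)\<^sup>2)
       = a + b * expectation Y + c * expectation (\<lambda>\<omega>. (Y \<omega>)\<^sup>2)"
  using assms prob_space by (auto simp: integral_add)

lemma integrable_shifted_square:
  fixes Y :: "'a \<Rightarrow> real"
  assumes "integrable M Y" "integrable M (\<lambda>\<omega>. (Y \<omega>)\<^sup>2)"
  shows "integrable M (\<lambda>\<omega>. (Y \<omega> - c)\<^sup>2)"
proof -
  have "(\<lambda>\<omega>. (Y \<omega> - c)\<^sup>2) = (\<lambda>\<omega>. c\<^sup>2 + (- 2 * c) * Y \<omega> + 1 * (Y \<omega>)\<^sup>2)"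
    by (simp add: power2_eq_square algebra_simps)
  then show ?thesis using integral_quadratic(1)[OF assms] by metis
qed

lemma prob_tail_layer_le:
  fixes Z :: "'a \<Rightarrow> real" and \<theta> N :: real
  assumes N: "2 \<le> N"
    and tail: "\<And>\<delta>. 0 < \<delta> \<Longrightarrow> \<delta> < 1 \<Longrightarrow> prob {\<omega> \<in> space M. \<theta> * ln (N / \<delta>) < \<bar>Z \<omega>\<bar>} \<le> \<delta>"
  shows "prob {\<omega> \<in> space M. 3 * \<theta> * ln N + 3 * \<theta> * real j < \<bar>Z \<omega>\<bar>} \<le> 1 / N\<^sup>2 * exp (- 3 * real j)"
proof -
  define \<delta> where "\<delta> = 1 / N\<^sup>2 * exp (- 3 * real j)"
  have "\<delta> \<le> 1 / N\<^sup>2" unfolding \<delta>_def using N by (intro mult_left_le) auto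
  moreover have "1 / N\<^sup>2 < 1" using N one_less_power[of N 2] by simp
  moreover have "0 < \<delta>" unfolding \<delta>_def using N by simp
  ultimately have \<delta>: "0 < \<delta>" "\<delta> < 1" by linarith+
  have "ln (N / \<delta>) = ln (N ^ 3 * exp (3 * real j))"
    unfolding \<delta>_def using N by (simp add: exp_minus field_simps power3_eq_cube power2_eq_square)
  also have "\<dots> = 3 * ln N + 3 * real j" using N by (simp add: ln_mult ln_realpow)
  finally have "\<theta> * ln (N / \<delta>) = 3 * \<theta> * ln N + 3 * \<theta> * real j" by (simp add: algebra_simps)
  then show ?thesis using tail[OF \<delta>] unfolding \<delta>_def by simp
qed

lemma nn_integral_fourth_power_le:
  fixes Z :: "'a \<Rightarrow> real" and \<theta> N :: real
  assumes Z: "Z \<in> borel_measurable M" "integrable M (\<lambda>\<omega>. (Z \<omega>)\<^sup>2)"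
    "expectation (\<lambda>\<omega>. (Z \<omega>)\<^sup>2) \<le> \<theta>\<^sup>2"
    and \<theta>: "0 < \<theta>" and N: "2 \<le> N"
    and tail: "\<And>\<delta>. 0 < \<delta> \<Longrightarrow> \<delta> < 1 \<Longrightarrow> prob {\<omega> \<in> space M. \<theta> * ln (N / \<delta>) < \<bar>Z \<omega>\<bar>} \<le> \<delta>"
  shows "(\<integral>\<^sup>+\<omega>. ennreal (Z \<omega> ^ 4) \<partial>M) \<le> ennreal (25400 * \<theta> ^ 4 * (ln N)\<^sup>2)"
proof -
  define c where "c = 3 * \<theta> * ln N"
  define d where "d = 3 * \<theta>"
  have c: "0 \<le> c" and d: "0 < d" unfolding c_def d_def using \<theta> N by simp_all
  define S where "S j = {\<omega> \<in> space M. c + d * real j < \<bar>Z \<omega>\<bar>}" for j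
  have S [measurable]: "S j \<in> events" for j unfolding S_def using Z(1) by measurable
  have prob_S: "prob (S j) \<le> 1 / N\<^sup>2 * exp (- 3 * real j)" for j
    using prob_tail_layer_le[of N \<theta> Z j, OF N tail] unfolding S_def c_def d_def by simp
  have "(\<integral>\<^sup>+\<omega>. ennreal (Z \<omega> ^ 4) \<partial>M)
      \<le> (\<integral>\<^sup>+\<omega>. ennreal (c\<^sup>2 * (Z \<omega>)\<^sup>2) + (\<Sum>j. ennreal ((c + d * real (Suc j)) ^ 4) * indicator (S j) \<omega>) \<partial>M)"
    using ennreal_power4_le_layers[OF c d] by (intro nn_integral_mono) (simp add: S_def indicator_def)
  also have "\<dots> = ennreal (c\<^sup>2 * expectation (\<lambda>\<omega>. (Z \<omega>)\<^sup>2))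
      + (\<Sum>j. ennreal ((c + d * real (Suc j)) ^ 4) * emeasure M (S j))"
    using Z(2) by (simp add: nn_integral_add nn_integral_suminf nn_integral_cmult_indicator
        nn_integral_eq_integral)
  also have "\<dots> \<le> ennreal (c\<^sup>2 * \<theta>\<^sup>2)
      + (\<Sum>j. ennreal ((c + d * real (Suc j)) ^ 4 * (1 / N\<^sup>2 * exp (- 3 * real j))))"
  proof (intro add_mono ennreal_leI suminf_le summableI mult_left_mono)
    fix j
    have "ennreal ((c + d * real (Suc j)) ^ 4) * emeasure M (S j)
        \<le> ennreal ((c + d * real (Suc j)) ^ 4) * ennreal (1 / N\<^sup>2 * exp (- 3 * real j))"
      using prob_S[of j] by (intro mult_left_mono) (auto simp: emeasure_eq_measure)
    also have "\<dots> = ennreal ((c + d * real (Suc j)) ^ 4 * (1 / N\<^sup>2 * exp (- 3 * real j)))"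
      by (rule ennreal_mult[symmetric]) (use c d in auto)
    finally show "ennreal ((c + d * real (Suc j)) ^ 4) * emeasure M (S j)
        \<le> ennreal ((c + d * real (Suc j)) ^ 4 * (1 / N\<^sup>2 * exp (- 3 * real j)))" .
  qed (use Z(3) in auto)
  also have "\<dots> \<le> ennreal (c\<^sup>2 * \<theta>\<^sup>2) + ennreal (32 * (1 / N\<^sup>2) * (c + d) ^ 4)"
    using c d by (intro add_mono suminf_layers_le) auto
  also have "\<dots> \<le> ennreal (25400 * \<theta> ^ 4 * (ln N)\<^sup>2)"
    using fourth_moment_constant_le[of \<theta> N] \<theta> N unfolding c_def d_def
    by (simp add: ennreal_plus[symmetric] del: ennreal_plus)
  finally show ?thesis .
qed

lemma fourth_moment_le_from_tail:
  fixes Z :: "'a \<Rightarrow> real" and \<theta> N :: real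
  assumes Z: "Z \<in> borel_measurable M" "integrable M (\<lambda>\<omega>. (Z \<omega>)\<^sup>2)"
    "expectation (\<lambda>\<omega>. (Z \<omega>)\<^sup>2) \<le> \<theta>\<^sup>2"
    and \<theta>: "0 \<le> \<theta>" and N: "2 \<le> N"
    and tail: "\<And>\<delta>. 0 < \<delta> \<Longrightarrow> \<delta> < 1 \<Longrightarrow> prob {\<omega> \<in> space M. \<theta> * ln (N / \<delta>) < \<bar>Z \<omega>\<bar>} \<le> \<delta>"
  shows "integrable M (\<lambda>\<omega>. Z \<omega> ^ 4)" "expectation (\<lambda>\<omega>. Z \<omega> ^ 4) \<le> 25400 * \<theta> ^ 4 * (ln N)\<^sup>2"
proof -
  have measurable: "(\<lambda>\<omega>. Z \<omega> ^ 4) \<in> borel_measurable M" using Z(1) by measurable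
  have "integrable M (\<lambda>\<omega>. Z \<omega> ^ 4) \<and> expectation (\<lambda>\<omega>. Z \<omega> ^ 4) \<le> 25400 * \<theta> ^ 4 * (ln N)\<^sup>2"
  proof (cases "\<theta> = 0")
    case True
    have "0 \<le> expectation (\<lambda>\<omega>. (Z \<omega>)\<^sup>2)" by (rule integral_nonneg_AE) simp
    moreover have "expectation (\<lambda>\<omega>. (Z \<omega>)\<^sup>2) \<le> 0" using Z(3) True by simp
    ultimately have "expectation (\<lambda>\<omega>. (Z \<omega>)\<^sup>2) = 0" by linarith
    then have "AE \<omega> in M. (Z \<omega>)\<^sup>2 = 0" using integral_nonneg_eq_0_iff_AE[OF Z(2)] by simp
    then have AE: "AE \<omega> in M. Z \<omega> ^ 4 = 0" by eventually_elim simp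
    show ?thesis
      using integrable_cong_AE[OF measurable _ AE] integral_cong_AE[OF measurable _ AE] \<theta> by simp
  next
    case False
    have bound: "(\<integral>\<^sup>+\<omega>. ennreal (Z \<omega> ^ 4) \<partial>M) \<le> ennreal (25400 * \<theta> ^ 4 * (ln N)\<^sup>2)"
      using False \<theta> by (intro nn_integral_fourth_power_le[OF Z _ N tail]) auto
    then have "integrable M (\<lambda>\<omega>. Z \<omega> ^ 4)"
      using measurable by (intro integrableI_nonneg) (auto simp: top_unique less_top[symmetric])
    moreover have "expectation (\<lambda>\<omega>. Z \<omega> ^ 4) \<le> 25400 * \<theta> ^ 4 * (ln N)\<^sup>2"
      using bound measurable \<theta> by (simp add: integral_eq_nn_integral enn2real_leI)
    ultimately show ?thesis ..
  qed
  then show "integrable M (\<lambda>\<omega>. Z \<omega> ^ 4)" "expectation (\<lambda>\<omega>. Z \<omega> ^ 4) \<le> 25400 * \<theta> ^ 4 * (ln N)\<^sup>2"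
    by auto
qed

lemma variance_quadratic_le:
  fixes Y :: "'a \<Rightarrow> real"
  assumes Y: "integrable M Y" "integrable M (\<lambda>\<omega>. (Y \<omega>)\<^sup>2)"
    and fourth: "integrable M (\<lambda>\<omega>. (Y \<omega> - expectation Y) ^ 4)"
  shows "variance (\<lambda>\<omega>. a + b * Y \<omega> + c * (Y \<omega>)\<^sup>2)
    \<le> 2 * (b + 2 * c * expectation Y)\<^sup>2 * variance Y
      + 2 * c\<^sup>2 * ((variance Y)\<^sup>2 + expectation (\<lambda>\<omega>. (Y \<omega> - expectation Y) ^ 4))"
proof -
  define m where "m = expectation Y"
  define S where "S = variance Y"
  define g where "g = b + 2 * c * m"
  have S0: "0 \<le> S" unfolding S_def by (rule variance_positive)
  have mean: "expectation (\<lambda>\<omega>. a + b * Y \<omega> + c * (Y \<omega>)\<^sup>2) = a + b * m + c * (S + m\<^sup>2)"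
    using integral_quadratic(2)[OF Y] variance_eq[OF Y] unfolding S_def m_def by simp
  have sq: "integrable M (\<lambda>\<omega>. (Y \<omega> - m)\<^sup>2)" using integrable_shifted_square[OF Y] .
  have pointwise: "(a + b * Y \<omega> + c * (Y \<omega>)\<^sup>2 - (a + b * m + c * (S + m\<^sup>2)))\<^sup>2
      \<le> 2 * g\<^sup>2 * (Y \<omega> - m)\<^sup>2 + 2 * c\<^sup>2 * S\<^sup>2 + 2 * c\<^sup>2 * (Y \<omega> - m) ^ 4" for \<omega>
  proof -
    define z where "z = Y \<omega> - m"
    have "a + b * Y \<omega> + c * (Y \<omega>)\<^sup>2 - (a + b * m + c * (S + m\<^sup>2)) = g * z + c * (z\<^sup>2 - S)"
      unfolding g_def z_def by (simp add: power2_eq_square algebra_simps)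
    moreover have "(g * z + c * (z\<^sup>2 - S))\<^sup>2 \<le> 2 * (g * z)\<^sup>2 + 2 * (c * (z\<^sup>2 - S))\<^sup>2"
      using sum_squares_ge_zero[of "g * z - c * (z\<^sup>2 - S)" 0] by (simp add: power2_eq_square algebra_simps)
    moreover have "(z\<^sup>2 - S)\<^sup>2 \<le> z ^ 4 + S\<^sup>2"
      using S0 by (simp add: power2_eq_square power4_eq_xxxx algebra_simps)
    then have "(c * (z\<^sup>2 - S))\<^sup>2 \<le> c\<^sup>2 * z ^ 4 + c\<^sup>2 * S\<^sup>2"
      by (metis distrib_left mult_left_mono power_mult_distrib zero_le_power2)
    ultimately show ?thesis unfolding z_def[symmetric] by (simp add: power_mult_distrib)
  qed
  have "variance (\<lambda>\<omega>. a + b * Y \<omega> + c * (Y \<omega>)\<^sup>2)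
      \<le> expectation (\<lambda>\<omega>. 2 * g\<^sup>2 * (Y \<omega> - m)\<^sup>2 + 2 * c\<^sup>2 * S\<^sup>2 + 2 * c\<^sup>2 * (Y \<omega> - m) ^ 4)"
    unfolding mean using sq fourth pointwise unfolding m_def[symmetric]
    by (intro integral_mono') auto
  also have "\<dots> = 2 * g\<^sup>2 * S + 2 * c\<^sup>2 * S\<^sup>2 + 2 * c\<^sup>2 * expectation (\<lambda>\<omega>. (Y \<omega> - m) ^ 4)"
    using sq fourth prob_space unfolding S_def m_def[symmetric] by simp
  finally show ?thesis unfolding S_def m_def g_def by (simp add: algebra_simps)
qed

lemma prob_all_ge_union_bound:
  assumes "finite I" and events: "\<And>i. i \<in> I \<Longrightarrow> {\<omega> \<in> space M. P i \<omega>} \<in> events"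
    and fail: "\<And>i. i \<in> I \<Longrightarrow> prob {\<omega> \<in> space M. \<not> P i \<omega>} \<le> \<delta>"
  shows "1 - real (card I) * \<delta> \<le> prob {\<omega> \<in> space M. \<forall>i\<in>I. P i \<omega>}"
proof -
  define F where "F i = {\<omega> \<in> space M. \<not> P i \<omega>}" for i
  have F: "F i \<in> events" if "i \<in> I" for i
  proof -
    have "F i = space M - {\<omega> \<in> space M. P i \<omega>}" unfolding F_def by auto
    then show ?thesis using events[OF that] by auto
  qed
  have "prob (\<Union>i\<in>I. F i) \<le> (\<Sum>i\<in>I. prob (F i))"
    using F by (intro finite_measure_subadditive_finite[OF assms(1)]) auto
  also have "\<dots> \<le> real (card I) * \<delta>"
    using sum_mono[of I "\<lambda>i. prob (F i)" "\<lambda>_. \<delta>"] fail unfolding F_def by simp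
  moreover have "(\<Union>i\<in>I. F i) \<in> events" using F assms(1) by auto
  ultimately have "1 - real (card I) * \<delta> \<le> prob (space M - (\<Union>i\<in>I. F i))"
    using prob_compl[of "\<Union>i\<in>I. F i"] by linarith
  also have "space M - (\<Union>i\<in>I. F i) = {\<omega> \<in> space M. \<forall>i\<in>I. P i \<omega>}"
    unfolding F_def by auto
  finally show ?thesis .
qed

end

section \<open>Coordinatewise estimates\<close>

lemma abs_divide_le_divide:
  fixes x X m T :: real
  assumes "0 < T" "T \<le> m" "\<bar>x\<bar> \<le> X"
  shows "\<bar>x / m\<bar> \<le> X / T"
proof -
  have "\<bar>x / m\<bar> = \<bar>x\<bar> / m" using assms by simp
  also have "\<dots> \<le> X / m" using assms by (intro divide_right_mono) auto
  also have "\<dots> \<le> X / T" using assms by (intro divide_left_mono) auto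
  finally show ?thesis .
qed

lemma abs_mult_divide_sqrt_le:
  fixes \<xi> y c m T :: real
  assumes "0 < T" "T \<le> m" "\<bar>\<xi>\<bar> \<le> c * sqrt m"
  shows "\<bar>\<xi> * y / m\<bar> \<le> c * \<bar>y\<bar> / sqrt T"
proof -
  have m: "0 < m" "0 < sqrt m" using assms by auto
  have "0 \<le> c * sqrt m" using assms(3) abs_ge_zero order_trans by blast
  then have c: "0 \<le> c" using m by (simp add: zero_le_mult_iff)
  have "\<bar>\<xi> * y / m\<bar> = \<bar>\<xi>\<bar> * \<bar>y\<bar> / m" using m by (simp add: abs_mult)
  also have "\<dots> \<le> c * sqrt m * \<bar>y\<bar> / m" using assms m by (intro divide_right_mono mult_right_mono) auto
  also have "\<dots> = c * \<bar>y\<bar> / sqrt m" using m by (simp add: field_simps)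
  also have "\<dots> \<le> c * \<bar>y\<bar> / sqrt T" using assms c by (intro divide_left_mono) auto
  finally show ?thesis .
qed

lemma abs_sqrt_sub_one_le:
  fixes x :: real
  assumes "0 \<le> x"
  shows "\<bar>sqrt x - 1\<bar> \<le> \<bar>x - 1\<bar>"
proof -
  have "(sqrt x - 1) * (sqrt x + 1) = x - 1" using assms by (simp add: algebra_simps)
  then have "\<bar>x - 1\<bar> = \<bar>sqrt x - 1\<bar> * \<bar>sqrt x + 1\<bar>" by (metis abs_mult)
  also have "\<bar>sqrt x + 1\<bar> = sqrt x + 1" using assms by simp
  finally have "\<bar>x - 1\<bar> = \<bar>sqrt x - 1\<bar> * (sqrt x + 1)" .
  moreover have "\<bar>sqrt x - 1\<bar> * 1 \<le> \<bar>sqrt x - 1\<bar> * (sqrt x + 1)"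
    using assms by (intro mult_left_mono) auto
  ultimately show ?thesis by simp
qed

lemma abs_sqrt_ratio_sub_one_le:
  fixes \<alpha> \<beta> e :: real
  assumes "\<bar>\<alpha> - 1\<bar> \<le> e" "\<bar>\<beta> - 1\<bar> \<le> e" "e < 1/4"
  shows "\<bar>sqrt (\<alpha> / \<beta>) - 1\<bar> \<le> 3 * e"
proof -
  have "\<bar>(\<alpha> - \<beta>) / \<beta>\<bar> \<le> 3 * e"
    using abs_divide_le_divide[of "2/3" \<beta> "\<alpha> - \<beta>" "2 * e"] assms by auto
  moreover have "\<beta> \<noteq> 0" using assms by auto
  ultimately have "\<bar>\<alpha> / \<beta> - 1\<bar> \<le> 3 * e" by (simp add: diff_divide_distrib)
  moreover have "0 \<le> \<alpha> / \<beta>" using assms by simp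
  ultimately show ?thesis using abs_sqrt_sub_one_le by (meson order_trans)
qed

lemma abs_inverse_sqrt_sub_sqrt_le:
  fixes \<alpha> e :: real
  assumes "\<bar>\<alpha> - 1\<bar> \<le> e" "e < 1/4"
  shows "\<bar>1 / sqrt \<alpha> - sqrt \<alpha>\<bar> \<le> 2 * e"
proof -
  have "sqrt (1/4) \<le> sqrt \<alpha>" using assms by (intro real_sqrt_le_mono) auto
  then have sa: "1/2 \<le> sqrt \<alpha>" by (simp add: real_sqrt_divide)
  have "\<bar>(1 - \<alpha>) / sqrt \<alpha>\<bar> \<le> e / (1/2)"
    using assms sa by (intro abs_divide_le_divide) auto
  moreover have "1 / sqrt \<alpha> - sqrt \<alpha> = (1 - \<alpha>) / sqrt \<alpha>"
    using sa assms by (simp add: field_simps)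
  ultimately show ?thesis by simp
qed

text \<open>With \<open>\<alpha> = w s / x\<close> and \<open>\<beta> = \<mu> / (x s)\<close> both within \<open>e\<close> of \<open>1\<close>, the two scaling
  errors below are \<open>\<surd>(\<alpha>/\<beta>) - 1\<close> and \<open>\<surd>(x s) (1/\<surd>\<alpha> - \<surd>\<alpha>)\<close>.\<close>

lemma scaling_errors_le:
  fixes x s w \<mu> e :: real
  assumes pos: "0 < x" "0 < s" "0 < w" and e: "e < 1/4"
    and w: "(1 - e) * (x / s) \<le> w" "w \<le> (1 + e) * (x / s)"
    and \<mu>: "(1 - e) * (x * s) \<le> \<mu>" "\<mu> \<le> (1 + e) * (x * s)"
  shows "\<bar>s * sqrt w / sqrt \<mu> - 1\<bar> \<le> 3 * e"
    and "\<bar>x / sqrt w - s * sqrt w\<bar> \<le> 2 * e * sqrt (x * s)"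
proof -
  define \<alpha> where "\<alpha> = w * s / x"
  define \<beta> where "\<beta> = \<mu> / (x * s)"
  have \<alpha>: "\<bar>\<alpha> - 1\<bar> \<le> e" unfolding \<alpha>_def using w pos by (simp add: abs_le_iff field_simps)
  have \<beta>: "\<bar>\<beta> - 1\<bar> \<le> e" unfolding \<beta>_def using \<mu> pos by (simp add: abs_le_iff field_simps)
  have "sqrt (\<alpha> / \<beta>) = sqrt (s\<^sup>2 * w / \<mu>)" unfolding \<alpha>_def \<beta>_def using pos
    by (simp add: field_simps power2_eq_square)
  also have "\<dots> = s * sqrt w / sqrt \<mu>" using pos by (simp add: real_sqrt_mult real_sqrt_divide)
  finally show "\<bar>s * sqrt w / sqrt \<mu> - 1\<bar> \<le> 3 * e"
    using abs_sqrt_ratio_sub_one_le[OF \<alpha> \<beta> e] by simp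
  have "sqrt (x * s) * (1 / sqrt \<alpha>) = x / sqrt w" "sqrt (x * s) * sqrt \<alpha> = s * sqrt w"
    unfolding \<alpha>_def using pos
    by (simp_all add: real_sqrt_mult real_sqrt_divide field_simps)
  then have "x / sqrt w - s * sqrt w = sqrt (x * s) * (1 / sqrt \<alpha> - sqrt \<alpha>)"
    by (simp add: right_diff_distrib)
  then have "\<bar>x / sqrt w - s * sqrt w\<bar> = sqrt (x * s) * \<bar>1 / sqrt \<alpha> - sqrt \<alpha>\<bar>"
    using pos by (simp add: abs_mult)
  also have "\<dots> \<le> sqrt (x * s) * (2 * e)"
    using abs_inverse_sqrt_sub_sqrt_le[OF \<alpha> e] pos by (intro mult_left_mono) auto
  finally show "\<bar>x / sqrt w - s * sqrt w\<bar> \<le> 2 * e * sqrt (x * s)" by (simp add: mult_ac)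
qed

lemma expected_error_coordinate_le:
  fixes \<mu> T \<kappa> e \<delta> \<tau> \<mu>' \<xi> h v V H b :: real
  assumes T: "0 < T" "T \<le> \<mu>" and \<kappa>: "\<bar>\<kappa> - 1\<bar> \<le> 3 * e"
    and \<mu>': "\<bar>\<mu>' - \<mu>\<bar> \<le> e * \<mu>" and \<xi>: "\<bar>\<xi>\<bar> \<le> 2 * e * sqrt \<mu>"
    and V: "0 \<le> V" "V \<le> H\<^sup>2 / b" and h: "\<bar>h\<bar> \<le> H"
  shows "\<bar>((\<kappa> - 1) * \<delta> + \<tau> * (\<mu>' - \<mu>) + \<xi> * h + (v - h) * h - V) / \<mu>\<bar>
    \<le> 3 * e / T * \<bar>\<delta>\<bar> + \<bar>\<tau>\<bar> * e + 2 * e / sqrt T * \<bar>h\<bar> + H / T * (\<bar>v\<bar> + \<bar>h\<bar>)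
      + H\<^sup>2 / (b * T)"
proof -
  have \<mu>: "0 < \<mu>" using T by linarith
  have "\<bar>(\<kappa> - 1) * \<delta> / \<mu>\<bar> \<le> 3 * e * \<bar>\<delta>\<bar> / T"
    using T \<kappa> by (intro abs_divide_le_divide) (auto simp: abs_mult intro: mult_right_mono)
  then have t1: "\<bar>(\<kappa> - 1) * \<delta> / \<mu>\<bar> \<le> 3 * e / T * \<bar>\<delta>\<bar>" by simp
  have "\<bar>\<mu>' - \<mu>\<bar> / \<mu> \<le> e" using \<mu>' \<mu> by (simp add: divide_le_eq)
  then have t2: "\<bar>\<tau> * (\<mu>' - \<mu>) / \<mu>\<bar> \<le> \<bar>\<tau>\<bar> * e"
    using \<mu> by (simp add: abs_mult mult_left_mono flip: times_divide_eq_right)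
  have t3: "\<bar>\<xi> * h / \<mu>\<bar> \<le> 2 * e / sqrt T * \<bar>h\<bar>"
    using abs_mult_divide_sqrt_le[OF T \<xi>] by simp
  have "\<bar>(v - h) * h\<bar> \<le> (\<bar>v\<bar> + \<bar>h\<bar>) * H"
    unfolding abs_mult using h by (intro mult_mono) auto
  then have "\<bar>(v - h) * h / \<mu>\<bar> \<le> (\<bar>v\<bar> + \<bar>h\<bar>) * H / T"
    by (rule abs_divide_le_divide[OF T])
  then have t4: "\<bar>(v - h) * h / \<mu>\<bar> \<le> H / T * (\<bar>v\<bar> + \<bar>h\<bar>)" by (simp add: mult.commute)
  have "\<bar>V / \<mu>\<bar> \<le> H\<^sup>2 / b / T"
    using T V by (intro abs_divide_le_divide) auto
  then have t5: "\<bar>V / \<mu>\<bar> \<le> H\<^sup>2 / (b * T)" by (simp add: mult.commute)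
  have triangle: "\<bar>a + b + c + d - f\<bar> \<le> \<bar>a\<bar> + \<bar>b\<bar> + \<bar>c\<bar> + \<bar>d\<bar> + \<bar>f\<bar>" for a b c d f :: real
    by (smt (verit))
  have split: "((\<kappa> - 1) * \<delta> + \<tau> * (\<mu>' - \<mu>) + \<xi> * h + (v - h) * h - V) / \<mu>
      = (\<kappa> - 1) * \<delta> / \<mu> + \<tau> * (\<mu>' - \<mu>) / \<mu> + \<xi> * h / \<mu> + (v - h) * h / \<mu> - V / \<mu>"
    by (simp add: diff_divide_distrib add_divide_distrib)
  show ?thesis
    unfolding split using triangle[of "(\<kappa> - 1) * \<delta> / \<mu>" "\<tau> * (\<mu>' - \<mu>) / \<mu>" "\<xi> * h / \<mu>" "(v - h) * h / \<mu>" "V / \<mu>"]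
      t1 t2 t3 t4 t5
    by linarith
qed

lemma relative_change_coordinate_le:
  fixes \<mu> T \<kappa> e \<delta> \<xi> v y N \<epsilon> :: real
  assumes T: "0 < T" "T \<le> \<mu>" and \<kappa>: "\<bar>\<kappa> - 1\<bar> \<le> 3 * e" and e: "e < 1/10000"
    and \<delta>: "\<bar>\<delta>\<bar> \<le> 97/100 * \<epsilon> * T" and \<xi>: "\<bar>\<xi>\<bar> \<le> 2 * e * sqrt \<mu>"
    and v: "\<bar>v\<bar> \<le> N" and y: "\<bar>y\<bar> \<le> 11/10 * N" and N: "N\<^sup>2 \<le> \<epsilon>\<^sup>2 * T"
    and \<epsilon>: "0 < \<epsilon>" "\<epsilon> < 1/10000"
  shows "\<bar>(\<kappa> * \<delta> + \<xi> * y + (v - y) * y) / \<mu>\<bar> \<le> 6 * \<epsilon>"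
proof -
  have e0: "0 \<le> e" and N0: "0 \<le> N" and sT: "0 < sqrt T" using \<kappa> v T by auto
  have NT: "N \<le> \<epsilon> * sqrt T"
    using real_sqrt_le_mono[OF N] N0 \<epsilon> T by (simp add: real_sqrt_mult)
  have "\<bar>\<kappa> * \<delta>\<bar> \<le> 2 * (97/100 * \<epsilon> * T)"
    unfolding abs_mult using \<kappa> e \<delta> by (intro mult_mono) auto
  then have "\<bar>\<kappa> * \<delta> / \<mu>\<bar> \<le> 2 * (97/100 * \<epsilon> * T) / T"
    by (rule abs_divide_le_divide[OF T])
  moreover have "2 * (97/100 * \<epsilon> * T) / T = 194/100 * \<epsilon>" using T by simp
  ultimately have t1: "\<bar>\<kappa> * \<delta> / \<mu>\<bar> \<le> 2 * \<epsilon>" using \<epsilon> by linarith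
  have "\<bar>\<xi> * y / \<mu>\<bar> \<le> 2 * e * \<bar>y\<bar> / sqrt T" using abs_mult_divide_sqrt_le[OF T \<xi>] .
  also have "\<dots> \<le> 2 * e * (11/10 * (\<epsilon> * sqrt T)) / sqrt T"
    using y NT e0 sT by (intro divide_right_mono mult_left_mono) auto
  also have "\<dots> = 22/10 * e * \<epsilon>" using sT by simp
  also have "\<dots> \<le> 1 * \<epsilon>" using e \<epsilon> by (intro mult_right_mono) auto
  finally have t2: "\<bar>\<xi> * y / \<mu>\<bar> \<le> \<epsilon>" by simp
  have "\<bar>v - y\<bar> \<le> 21/10 * N" using v y abs_triangle_ineq4[of v y] by linarith
  then have "\<bar>(v - y) * y\<bar> \<le> (21/10 * N) * (11/10 * N)"
    unfolding abs_mult using y N0 by (intro mult_mono) auto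
  also have "\<dots> \<le> 231/100 * (\<epsilon>\<^sup>2 * T)" using N by (simp add: power2_eq_square)
  finally have "\<bar>(v - y) * y / \<mu>\<bar> \<le> 231/100 * (\<epsilon>\<^sup>2 * T) / T"
    by (rule abs_divide_le_divide[OF T])
  moreover have "231/100 * (\<epsilon>\<^sup>2 * T) / T = 231/100 * \<epsilon>\<^sup>2" using T by simp
  moreover have "\<epsilon>\<^sup>2 \<le> 1/10000 * \<epsilon>"
    unfolding power2_eq_square using \<epsilon> by (intro mult_right_mono) auto
  ultimately have t3: "\<bar>(v - y) * y / \<mu>\<bar> \<le> \<epsilon>" using \<epsilon> by linarith
  have split: "(\<kappa> * \<delta> + \<xi> * y + (v - y) * y) / \<mu> = \<kappa> * \<delta> / \<mu> + \<xi> * y / \<mu> + (v - y) * y / \<mu>"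
    by (simp add: add_divide_distrib)
  show ?thesis
    unfolding split using abs_triangle_ineq[of "\<kappa> * \<delta> / \<mu> + \<xi> * y / \<mu>" "(v - y) * y / \<mu>"]
      abs_triangle_ineq[of "\<kappa> * \<delta> / \<mu>" "\<xi> * y / \<mu>"] t1 t2 t3 \<epsilon>
    by linarith
qed

lemma variance_linear_part_le:
  fixes \<mu> T \<xi> e v h V N \<epsilon> b :: real
  assumes T: "0 < T" "T \<le> \<mu>" and \<xi>: "\<bar>\<xi>\<bar> \<le> 2 * e * sqrt \<mu>"
    and v: "\<bar>v\<bar> \<le> N" and h: "\<bar>h\<bar> \<le> N" and V: "0 \<le> V" "V \<le> N\<^sup>2 / b"
    and N: "N\<^sup>2 \<le> \<epsilon>\<^sup>2 * T" and b: "0 < b"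
  shows "2 * ((\<xi> + v) / \<mu> + 2 * (- 1 / \<mu>) * h)\<^sup>2 * V \<le> 16 * e\<^sup>2 * \<epsilon>\<^sup>2 / b + 36 * \<epsilon> ^ 4 / b"
proof -
  have \<mu>: "0 < \<mu>" using T by linarith
  have N\<mu>: "N\<^sup>2 \<le> \<epsilon>\<^sup>2 * \<mu>" using N T by (meson mult_left_mono order_trans zero_le_power2)
  have V\<mu>: "V \<le> \<epsilon>\<^sup>2 * \<mu> / b" using V N\<mu> b by (meson divide_right_mono order_trans less_imp_le)
  have "(\<xi> + v - 2 * h)\<^sup>2 \<le> 2 * \<xi>\<^sup>2 + 2 * (v - 2 * h)\<^sup>2"
    using sum_squares_ge_zero[of "\<xi> - (v - 2 * h)" 0] by (simp add: power2_eq_square algebra_simps)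
  also have "\<dots> \<le> 2 * (2 * e * sqrt \<mu>)\<^sup>2 + 2 * (3 * N)\<^sup>2"
  proof -
    have "\<bar>v - 2 * h\<bar> \<le> 3 * N" using v h by linarith
    then show ?thesis using power_mono[OF \<xi>, of 2] power_mono[of "\<bar>v - 2 * h\<bar>" "3 * N" 2] by simp
  qed
  also have "\<dots> \<le> (8 * e\<^sup>2 + 18 * \<epsilon>\<^sup>2) * \<mu>"
    using N\<mu> \<mu> by (simp add: power_mult_distrib algebra_simps)
  finally have D: "(\<xi> + v - 2 * h)\<^sup>2 \<le> (8 * e\<^sup>2 + 18 * \<epsilon>\<^sup>2) * \<mu>" .
  have "(\<xi> + v) / \<mu> + 2 * (- 1 / \<mu>) * h = (\<xi> + v - 2 * h) / \<mu>"
    using \<mu> by (simp add: field_simps)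
  then have "((\<xi> + v) / \<mu> + 2 * (- 1 / \<mu>) * h)\<^sup>2 \<le> (8 * e\<^sup>2 + 18 * \<epsilon>\<^sup>2) * \<mu> / \<mu>\<^sup>2"
    using divide_right_mono[OF D, of "\<mu>\<^sup>2"] by (simp add: power_divide)
  then have "2 * ((\<xi> + v) / \<mu> + 2 * (- 1 / \<mu>) * h)\<^sup>2 * V
      \<le> 2 * ((8 * e\<^sup>2 + 18 * \<epsilon>\<^sup>2) * \<mu> / \<mu>\<^sup>2) * (\<epsilon>\<^sup>2 * \<mu> / b)"
    using V V\<mu> \<mu> by (intro mult_mono mult_left_mono) auto
  also have "\<dots> = 16 * e\<^sup>2 * \<epsilon>\<^sup>2 / b + 36 * \<epsilon> ^ 4 / b"
    using \<mu> b by (simp add: power2_eq_square power4_eq_xxxx field_simps)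
  finally show ?thesis .
qed

lemma variance_quadratic_part_le:
  fixes \<mu> T V N \<epsilon> b L Q :: real
  assumes T: "0 < T" "T \<le> \<mu>" and V: "0 \<le> V" "V \<le> N\<^sup>2 / b"
    and N: "N\<^sup>2 \<le> \<epsilon>\<^sup>2 * T" and b: "1 \<le> b" and L: "L\<^sup>2 \<le> b / 1000"
    and Q: "Q \<le> 25400 * (N\<^sup>2 / b)\<^sup>2 * L\<^sup>2"
  shows "2 * (- 1 / \<mu>)\<^sup>2 * (V\<^sup>2 + Q) \<le> 528/10 * \<epsilon> ^ 4 / b"
proof -
  have \<mu>: "0 < \<mu>" using T by linarith
  have "N\<^sup>2 \<le> \<epsilon>\<^sup>2 * \<mu>" using N T by (meson mult_left_mono order_trans zero_le_power2)
  then have N\<mu>: "N\<^sup>2 / b \<le> \<epsilon>\<^sup>2 * \<mu> / b" using b by (intro divide_right_mono) auto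
  have "V\<^sup>2 \<le> (\<epsilon>\<^sup>2 * \<mu> / b)\<^sup>2" using V N\<mu> by (intro power_mono) auto
  also have "\<dots> = (\<epsilon>\<^sup>2 * \<mu>)\<^sup>2 / b / b" by (simp add: power_divide power2_eq_square)
  also have "\<dots> \<le> (\<epsilon>\<^sup>2 * \<mu>)\<^sup>2 / b / 1" using b by (intro divide_left_mono) auto
  finally have "V\<^sup>2 \<le> (\<epsilon>\<^sup>2 * \<mu>)\<^sup>2 / b" by simp
  moreover have "Q \<le> 254/10 * (\<epsilon>\<^sup>2 * \<mu>)\<^sup>2 / b"
  proof -
    have "(N\<^sup>2 / b)\<^sup>2 \<le> (\<epsilon>\<^sup>2 * \<mu> / b)\<^sup>2" using N\<mu> b by (intro power_mono) auto
    then have "Q \<le> 25400 * ((\<epsilon>\<^sup>2 * \<mu>) / b)\<^sup>2 * (b / 1000)"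
      using Q L b by (smt (verit) mult_mono mult_left_mono zero_le_power2)
    also have "\<dots> = 254/10 * (\<epsilon>\<^sup>2 * \<mu>)\<^sup>2 / b" using b by (simp add: power2_eq_square field_simps)
    finally show ?thesis .
  qed
  ultimately have "2 * (- 1 / \<mu>)\<^sup>2 * (V\<^sup>2 + Q) \<le> 2 * (- 1 / \<mu>)\<^sup>2 * (264/10 * (\<epsilon>\<^sup>2 * \<mu>)\<^sup>2 / b)"
    by (intro mult_left_mono) auto
  also have "\<dots> = 528/10 * \<epsilon> ^ 4 / b" using \<mu> by (simp add: power2_eq_square power4_eq_xxxx field_simps)
  finally show ?thesis .
qed

lemma variance_coordinate_le:
  fixes \<mu> T \<xi> e v h V N \<epsilon> b L Q :: real
  assumes T: "0 < T" "T \<le> \<mu>" and \<xi>: "\<bar>\<xi>\<bar> \<le> 2 * e * sqrt \<mu>"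
    and v: "\<bar>v\<bar> \<le> N" and h: "\<bar>h\<bar> \<le> N" and V: "0 \<le> V" "V \<le> N\<^sup>2 / b"
    and N: "N\<^sup>2 \<le> \<epsilon>\<^sup>2 * T" and b: "1 \<le> b" and L: "L\<^sup>2 \<le> b / 1000"
    and Q: "Q \<le> 25400 * (N\<^sup>2 / b)\<^sup>2 * L\<^sup>2"
  shows "2 * ((\<xi> + v) / \<mu> + 2 * (- 1 / \<mu>) * h)\<^sup>2 * V + 2 * (- 1 / \<mu>)\<^sup>2 * (V\<^sup>2 + Q)
    \<le> 16 * e\<^sup>2 * \<epsilon>\<^sup>2 / b + 320 * \<epsilon> ^ 4 / b"
proof -
  have "0 \<le> \<epsilon> ^ 4 / b" using b by simp
  then show ?thesis
    using variance_linear_part_le[OF T \<xi> v h V N] variance_quadratic_part_le[OF T V N b L Q] b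
    by linarith
qed

section \<open>One step of the sketched method\<close>

locale sketched_step =
  fixes n d b :: nat and A :: "real mat" and eps eps_mp lam t :: real
    and xb sb wt mut :: "real vec" and M :: "'w measure" and R :: "'w \<Rightarrow> real mat"
  assumes n_ge_2: "2 \<le> n" and full_rank: "full_row_rank d n A"
    and eps: "0 < eps" "eps < 1/10000" and eps_mp: "0 < eps_mp" "eps_mp < 1/10000"
    and b_large: "1000 * (ln (real n))\<^sup>2 \<le> real b" and t_pos: "0 < t"
    and xb: "xb \<in> carrier_vec n" "pos_vec xb" and sb: "sb \<in> carrier_vec n" "pos_vec sb"
    and wt: "wt \<in> carrier_vec n" "pos_vec wt" and mut: "mut \<in> carrier_vec n" "pos_vec mut"
    and mut_approx: "approx_vec mut eps_mp (vmul xb sb)"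
    and wt_approx: "approx_vec wt eps_mp (vdivide xb sb)"
    and mub_approx: "approx_scal (vmul xb sb) (1/10) t"
    and grad_nonzero: "gradPhi lam (Matrix.vec n (\<lambda>i. mut $ i / t - 1)) \<noteq> 0\<^sub>v n"
    and sketch: "sketch_hyps M b n R"
begin

sublocale prob_space M
  using sketch by (simp add: sketch_hyps_def)

definition mub :: "nat \<Rightarrow> real" where "mub i = xb $ i * sb $ i"

definition t_lo :: real where "t_lo = 9/10 * t"

definition tau :: real where "tau = tnew n eps t / t - 1"

definition dmu :: "real vec" where "dmu = delta_mu n eps lam t mut"

definition dPhi :: "real vec" where "dPhi = delta_Phi n eps lam t mut"

definition v :: "real vec" where "v = Matrix.vec n (\<lambda>i. dmu $ i / sqrt (mut $ i))"

definition h :: "real vec" where "h = projP A wt *\<^sub>v v"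

definition Y :: "nat \<Rightarrow> 'w \<Rightarrow> real" where "Y i \<omega> = (transpose_mat (R \<omega>) * R \<omega> *\<^sub>v h) $ i"

definition kappa :: "nat \<Rightarrow> real" where "kappa i = sb $ i * sqrt (wt $ i) / sqrt (mut $ i)"

definition xi :: "nat \<Rightarrow> real" where "xi i = xb $ i / sqrt (wt $ i) - sb $ i * sqrt (wt $ i)"

lemma dims: "dim_vec xb = n" "dim_vec sb = n" "dim_vec wt = n" "dim_vec mut = n"
  using xb sb wt mut by auto

lemma pos_index:
  assumes "i < n"
  shows "0 < xb $ i" "0 < sb $ i" "0 < wt $ i" "0 < mut $ i"
  using assms xb sb wt mut dims unfolding pos_vec_def by auto

lemma vmul_index [simp]: "i < n \<Longrightarrow> vmul xb sb $ i = mub i"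
  using dims by (simp add: vmul_def mub_def)

lemma delta_t_index [simp]: "i < n \<Longrightarrow> delta_t n eps t (vmul xb sb) $ i = tau * mub i"
  using dims by (simp add: delta_t_def tau_def vmul_def mub_def)

lemma mub_bounds:
  assumes "i < n"
  shows "t_lo \<le> mub i" "mub i \<le> 11/10 * t" "0 < mub i"
  using mub_approx assms dims t_pos unfolding approx_scal_def t_lo_def
  by (auto simp: vmul_def mub_def)

lemma t_lo_pos: "0 < t_lo"
  using t_pos by (simp add: t_lo_def)

lemma mut_close:
  assumes "i < n"
  shows "(1 - eps_mp) * mub i \<le> mut $ i" "mut $ i \<le> (1 + eps_mp) * mub i"
    "\<bar>mut $ i - mub i\<bar> \<le> eps_mp * mub i"
  using mut_approx assms dims unfolding approx_vec_def
  by (auto simp: vmul_def mub_def abs_le_iff algebra_simps)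

lemma scaling_errors:
  assumes "i < n"
  shows "\<bar>kappa i - 1\<bar> \<le> 3 * eps_mp" "\<bar>xi i\<bar> \<le> 2 * eps_mp * sqrt (mub i)"
proof -
  have "(1 - eps_mp) * (xb $ i / sb $ i) \<le> wt $ i" "wt $ i \<le> (1 + eps_mp) * (xb $ i / sb $ i)"
    using wt_approx assms dims unfolding approx_vec_def by (auto simp: vdivide_def)
  then show "\<bar>kappa i - 1\<bar> \<le> 3 * eps_mp" "\<bar>xi i\<bar> \<le> 2 * eps_mp * sqrt (mub i)"
    using scaling_errors_le[OF pos_index(1-3)[OF assms]] mut_close(1,2)[OF assms] eps_mp
    unfolding kappa_def xi_def mub_def by auto
qed

lemma sqrt_n_ge_1: "1 \<le> sqrt (real n)"
  using n_ge_2 by simp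

lemma tau_eq: "tau = - (eps / (3 * sqrt (real n)))"
  unfolding tau_def tnew_def using t_pos by simp

lemma abs_tau: "\<bar>tau\<bar> = eps / (3 * sqrt (real n))"
  unfolding tau_eq using eps by simp

lemma carriers: "dmu \<in> carrier_vec n" "dPhi \<in> carrier_vec n" "v \<in> carrier_vec n" "h \<in> carrier_vec n"
  using mut dims projP_carrier[OF full_rank wt]
  by (auto simp: dmu_def dPhi_def v_def h_def delta_mu_carrier delta_Phi_def Let_def gradPhi_def)

lemma dmu_index: "i < n \<Longrightarrow> dmu $ i = tau * mut $ i + dPhi $ i"
  using dims carriers by (simp add: dmu_def dPhi_def delta_mu_def delta_t_def tau_def)

lemma norm2_dPhi: "norm2 dPhi \<le> eps / 2 * t"
proof -
  define g where "g = gradPhi lam (Matrix.vec n (\<lambda>i. mut $ i / t - 1))"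
  have g: "0 < norm2 g"
    using grad_nonzero unfolding g_def by (intro norm2_pos[of _ n]) (auto simp: gradPhi_def)
  have "1 - eps / (3 * sqrt (real n)) \<le> 1" using eps by simp
  moreover have "eps / (3 * sqrt (real n)) \<le> eps / 3"
    using eps sqrt_n_ge_1 by (intro divide_left_mono) auto
  then have "0 \<le> 1 - eps / (3 * sqrt (real n))" using eps by linarith
  ultimately have "\<bar>tnew n eps t\<bar> \<le> t" using t_pos unfolding tnew_def by (simp add: abs_mult)
  moreover have "norm2 dPhi = eps / 2 * \<bar>tnew n eps t\<bar>"
  proof -
    define c where "c = - (eps / 2) * tnew n eps t / norm2 g"
    have "dPhi = c \<cdot>\<^sub>v g" unfolding dPhi_def delta_Phi_def Let_def c_def g_def using dims by simp
    then have "norm2 dPhi = \<bar>c\<bar> * norm2 g" by (simp add: norm2_smult)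
    also have "\<dots> = eps / 2 * \<bar>tnew n eps t\<bar>" unfolding c_def using g eps by (simp add: abs_mult)
    finally show ?thesis .
  qed
  ultimately show ?thesis using eps by (simp add: mult_left_mono)
qed

lemma norm2_dmu_le: "norm2 dmu \<le> 97/100 * eps * t_lo"
proof -
  define C where "C = eps / (3 * sqrt (real n)) * ((1 + eps_mp) * (11/10 * t))"
  have C: "0 \<le> C" unfolding C_def using eps eps_mp t_pos by simp
  have "norm2 dmu = L2_set (\<lambda>i. tau * mut $ i + dPhi $ i) {..<n}"
    unfolding norm2_eq_L2_set using carriers by (intro L2_set_cong) (auto simp: dmu_index)
  also have "\<dots> \<le> L2_set (\<lambda>i. tau * mut $ i) {..<n} + norm2 dPhi"
    using L2_set_triangle_ineq carriers by (simp add: norm2_eq_L2_set)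
  also have "L2_set (\<lambda>i. tau * mut $ i) {..<n} \<le> L2_set (\<lambda>_. C) {..<n}"
  proof (intro L2_set_abs_mono)
    fix i assume "i \<in> {..<n}"
    then have i: "i < n" by simp
    have "mut $ i \<le> (1 + eps_mp) * (11/10 * t)"
      using mut_close(2)[OF i] mub_bounds(2)[OF i] eps_mp order_trans
      by (meson less_eq_real_def mult_left_mono add_nonneg_nonneg zero_le_one)
    then show "\<bar>tau * mut $ i\<bar> \<le> C"
      using pos_index(4)[OF i] eps unfolding abs_mult abs_tau C_def by (intro mult_left_mono) auto
  qed
  also have "L2_set (\<lambda>_. C) {..<n} = eps * t * ((1 + eps_mp) * (11/30))"
    using sqrt_n_ge_1 unfolding L2_set_constant abs_of_nonneg[OF C] by (simp add: C_def)
  finally have "norm2 dmu \<le> eps * t * ((1 + eps_mp) * (11/30) + 1/2)"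
    using norm2_dPhi by (simp add: algebra_simps)
  also have "\<dots> \<le> eps * t * (873/1000)"
    using eps eps_mp t_pos by (intro mult_left_mono) auto
  finally show ?thesis unfolding t_lo_def by simp
qed

lemma norm2_v_sq_le: "(norm2 v)\<^sup>2 \<le> eps\<^sup>2 * t_lo"
proof -
  define T where "T = (1 - eps_mp) * t_lo"
  have T: "0 < T" unfolding T_def t_lo_def using eps_mp t_pos by simp
  have "(norm2 v)\<^sup>2 = (\<Sum>i<n. (v $ i)\<^sup>2)" using carriers by (simp add: norm2_def sum_nonneg)
  also have "\<dots> \<le> (\<Sum>i<n. (dmu $ i)\<^sup>2 / T)"
  proof (intro sum_mono)
    fix i assume "i \<in> {..<n}"
    then have i: "i < n" by simp
    have "(1 - eps_mp) * t_lo \<le> (1 - eps_mp) * mub i"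
      using mub_bounds(1)[OF i] eps_mp by (intro mult_left_mono) auto
    then have "T \<le> mut $ i" using mut_close(1)[OF i] unfolding T_def by linarith
    then show "(v $ i)\<^sup>2 \<le> (dmu $ i)\<^sup>2 / T"
      using i T pos_index(4)[OF i] by (simp add: v_def power_divide divide_left_mono)
  qed
  also have "\<dots> = (norm2 dmu)\<^sup>2 / T"
    using carriers by (simp add: norm2_def sum_nonneg sum_divide_distrib)
  also have "\<dots> \<le> (97/100 * eps * t_lo)\<^sup>2 / T"
    using norm2_dmu_le norm2_nonneg[of dmu] T by (intro divide_right_mono power_mono) auto
  also have "\<dots> \<le> eps\<^sup>2 * t_lo"
  proof -
    have "(97/100 * eps * t_lo)\<^sup>2 = 9409/10000 * (eps\<^sup>2 * t_lo) * t_lo" by (simp add: power2_eq_square)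
    also have "\<dots> \<le> (1 - eps_mp) * (eps\<^sup>2 * t_lo) * t_lo"
      using eps_mp t_pos unfolding t_lo_def by (intro mult_right_mono) auto
    finally show ?thesis using T unfolding T_def by (simp add: divide_le_eq mult_ac)
  qed
  finally show ?thesis .
qed

lemma norm2_v_le: "norm2 v \<le> eps * sqrt t_lo"
  using real_sqrt_le_mono[OF norm2_v_sq_le] norm2_nonneg[of v] eps t_lo_pos
  by (simp add: real_sqrt_mult)

lemma norm2_h_le: "norm2 h \<le> norm2 v"
  unfolding h_def using full_rank wt carriers by (intro norm2_projP_le) auto

lemma index_le_norm2_v:
  assumes "i < n"
  shows "\<bar>v $ i\<bar> \<le> norm2 v" "\<bar>h $ i\<bar> \<le> norm2 h" "\<bar>dmu $ i\<bar> \<le> norm2 dmu"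
  using assms carriers abs_index_le_norm2 by auto

lemma R_carrier: "\<omega> \<in> space M \<Longrightarrow> R \<omega> \<in> carrier_mat b n"
  using sketch by (simp add: sketch_hyps_def)

lemma mu_new_coord:
  assumes i: "i < n" and \<omega>: "\<omega> \<in> space M"
  shows "mu_new n eps lam t A wt mut xb sb (R \<omega>) $ i
    = mub i + kappa i * dmu $ i + (xi i + v $ i) * Y i \<omega> - (Y i \<omega>)\<^sup>2"
proof -
  have "mu_new n eps lam t A wt mut xb sb (R \<omega>) $ i
      = (xb $ i + sqrt (wt $ i) * (v $ i - Y i \<omega>)) * (sb $ i + Y i \<omega> / sqrt (wt $ i))"
    using mu_new_index[OF full_rank wt mut R_carrier[OF \<omega>] i xb(1) sb(1)]
    unfolding v_def dmu_def Y_def h_def by simp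
  also have "\<dots> = mub i + kappa i * dmu $ i + (xi i + v $ i) * Y i \<omega> - (Y i \<omega>)\<^sup>2"
    using pos_index[OF i] i
    by (simp add: mub_def kappa_def xi_def v_def field_simps power2_eq_square)
  finally show ?thesis .
qed

lemma b_ge_1: "1 \<le> real b"
proof -
  have "ln 2 \<le> ln (real n)" using n_ge_2 by simp
  then have "2/3 \<le> ln (real n)" using ln2_ge_two_thirds by linarith
  then have "(2/3)\<^sup>2 \<le> (ln (real n))\<^sup>2" by (intro power_mono) auto
  then show ?thesis using b_large by (simp add: power2_eq_square)
qed

lemma sketch_moments:
  assumes i: "i < n"
  shows "integrable M (Y i)" "expectation (Y i) = h $ i" "integrable M (\<lambda>\<omega>. (Y i \<omega>)\<^sup>2)"
    "variance (Y i) \<le> (norm2 h)\<^sup>2 / real b"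
    "\<And>\<delta>. 0 < \<delta> \<Longrightarrow> \<delta> < 1 \<Longrightarrow>
      prob {\<omega> \<in> space M. norm2 h * ln (real n / \<delta>) / sqrt (real b) < \<bar>Y i \<omega> - h $ i\<bar>} \<le> \<delta>"
proof -
  note hyps = sketch[unfolded sketch_hyps_def, THEN conjunct2, THEN conjunct2, THEN conjunct2,
      rule_format, OF carriers(4) i]
  show Y: "integrable M (Y i)" "expectation (Y i) = h $ i" "integrable M (\<lambda>\<omega>. (Y i \<omega>)\<^sup>2)"
    using hyps unfolding Y_def by auto
  show "variance (Y i) \<le> (norm2 h)\<^sup>2 / real b"
    using hyps variance_eq[OF Y(1,3)] Y(2) unfolding Y_def by simp
  show "\<And>\<delta>. 0 < \<delta> \<Longrightarrow> \<delta> < 1 \<Longrightarrow>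
      prob {\<omega> \<in> space M. norm2 h * ln (real n / \<delta>) / sqrt (real b) < \<bar>Y i \<omega> - h $ i\<bar>} \<le> \<delta>"
    using hyps unfolding Y_def by auto
qed

lemma Y_measurable [measurable]: "i < n \<Longrightarrow> Y i \<in> borel_measurable M"
  using sketch_moments(1) by blast

lemma expectation_mu_new_shifted:
  assumes i: "i < n"
  shows "expectation (\<lambda>\<omega>. (mu_new n eps lam t A wt mut xb sb (R \<omega>) $ i - c) / mub i)
    = (mub i + kappa i * dmu $ i + (xi i + v $ i) * h $ i - (h $ i)\<^sup>2 - variance (Y i) - c) / mub i"
proof -
  note Y = sketch_moments[OF i]
  have "expectation (\<lambda>\<omega>. (mu_new n eps lam t A wt mut xb sb (R \<omega>) $ i - c) / mub i)
      = expectation (\<lambda>\<omega>. (mub i + kappa i * dmu $ i - c) / mub i + (xi i + v $ i) / mub i * Y i \<omega>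
          + (- 1 / mub i) * (Y i \<omega>)\<^sup>2)"
    using mub_bounds(3)[OF i]
    by (intro Bochner_Integration.integral_cong) (auto simp: mu_new_coord[OF i] field_simps)
  also have "\<dots> = (mub i + kappa i * dmu $ i - c) / mub i + (xi i + v $ i) / mub i * h $ i
      + (- 1 / mub i) * expectation (\<lambda>\<omega>. (Y i \<omega>)\<^sup>2)"
    by (simp only: integral_quadratic(2)[OF Y(1,3)] Y(2))
  also have "\<dots> = (mub i + kappa i * dmu $ i + (xi i + v $ i) * h $ i - (h $ i)\<^sup>2 - variance (Y i) - c) / mub i"
    using variance_eq[OF Y(1,3)] Y(2) mub_bounds(3)[OF i] by (simp add: field_simps)
  finally show ?thesis .
qed

definition err :: "nat \<Rightarrow> real" where
  "err i = ((kappa i - 1) * dmu $ i + tau * (mut $ i - mub i) + xi i * h $ i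
    + (v $ i - h $ i) * h $ i - variance (Y i)) / mub i"

lemma expected_error_eq:
  assumes i: "i < n"
  shows "expectation (\<lambda>\<omega>. (mu_new n eps lam t A wt mut xb sb (R \<omega>) $ i - mub i
      - tau * mub i - dPhi $ i) / mub i) = err i"
proof -
  have "expectation (\<lambda>\<omega>. (mu_new n eps lam t A wt mut xb sb (R \<omega>) $ i - mub i
      - tau * mub i - dPhi $ i) / mub i)
    = expectation (\<lambda>\<omega>. (mu_new n eps lam t A wt mut xb sb (R \<omega>) $ i
      - (mub i + tau * mub i + dPhi $ i)) / mub i)"
    by (simp only: diff_diff_eq)
  also have "\<dots> = err i"
    unfolding expectation_mu_new_shifted[OF i] err_def
    using dmu_index[OF i] mub_bounds(3)[OF i] by (simp add: field_simps power2_eq_square)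
  finally show ?thesis .
qed

lemma expected_change_eq:
  assumes i: "i < n"
  shows "expectation (\<lambda>\<omega>. (mu_new n eps lam t A wt mut xb sb (R \<omega>) $ i - mub i) / mub i)
    = err i + tau + dPhi $ i / mub i"
  unfolding expectation_mu_new_shifted[OF i] err_def
  using dmu_index[OF i] mub_bounds(3)[OF i] by (simp add: field_simps power2_eq_square)

lemma abs_err_le:
  assumes i: "i < n"
  shows "\<bar>err i\<bar> \<le> 3 * eps_mp / t_lo * \<bar>dmu $ i\<bar> + \<bar>tau\<bar> * eps_mp
    + 2 * eps_mp / sqrt t_lo * \<bar>h $ i\<bar> + norm2 h / t_lo * (\<bar>v $ i\<bar> + \<bar>h $ i\<bar>)
    + (norm2 h)\<^sup>2 / (real b * t_lo)"
  unfolding err_def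
proof (rule expected_error_coordinate_le)
  show "0 < t_lo" using t_pos by (simp add: t_lo_def)
qed (use mub_bounds(1) scaling_errors mut_close(3) variance_positive sketch_moments(4)
      index_le_norm2_v(2) i in auto)

lemma L2_err_le_norms:
  "L2_set err {..<n} \<le> 3 * eps_mp / t_lo * norm2 dmu + sqrt (real n) * (\<bar>tau\<bar> * eps_mp)
    + 2 * eps_mp / sqrt t_lo * norm2 h + norm2 h / t_lo * (norm2 v + norm2 h)
    + sqrt (real n) * ((norm2 h)\<^sup>2 / (real b * t_lo))"
proof -
  define H where "H = norm2 h"
  define T where "T = t_lo"
  have T: "0 < T" "0 < sqrt T" and H: "0 \<le> H / T" and b: "0 < real b"
    using t_lo_pos b_ge_1 norm2_nonneg[of h] unfolding T_def H_def by auto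
  have "L2_set err {..<n} \<le> L2_set (\<lambda>i. 3 * eps_mp / T * \<bar>dmu $ i\<bar> + \<bar>tau\<bar> * eps_mp
      + 2 * eps_mp / sqrt T * \<bar>h $ i\<bar> + H / T * \<bar>\<bar>v $ i\<bar> + \<bar>h $ i\<bar>\<bar> + H\<^sup>2 / (real b * T)) {..<n}"
    using abs_err_le unfolding H_def T_def by (intro L2_set_abs_mono) auto
  also have "\<dots> \<le> L2_set (\<lambda>i. 3 * eps_mp / T * \<bar>dmu $ i\<bar>) {..<n} + L2_set (\<lambda>_. \<bar>tau\<bar> * eps_mp) {..<n}
      + L2_set (\<lambda>i. 2 * eps_mp / sqrt T * \<bar>h $ i\<bar>) {..<n}
      + L2_set (\<lambda>i. H / T * \<bar>\<bar>v $ i\<bar> + \<bar>h $ i\<bar>\<bar>) {..<n} + L2_set (\<lambda>_. H\<^sup>2 / (real b * T)) {..<n}"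
    by (rule L2_set_add5_le)
  also have "\<dots> \<le> 3 * eps_mp / T * norm2 dmu + sqrt (real n) * (\<bar>tau\<bar> * eps_mp)
      + 2 * eps_mp / sqrt T * H + H / T * (norm2 v + H) + sqrt (real n) * (H\<^sup>2 / (real b * T))"
  proof -
    have "L2_set (\<lambda>i. \<bar>v $ i\<bar> + \<bar>h $ i\<bar>) {..<n} \<le> norm2 v + H"
      using L2_set_triangle_ineq[of "\<lambda>i. \<bar>v $ i\<bar>" "\<lambda>i. \<bar>h $ i\<bar>" "{..<n}"] carriers
      unfolding H_def by (simp add: L2_set_abs norm2_eq_L2_set)
    then have "H / T * L2_set (\<lambda>i. \<bar>v $ i\<bar> + \<bar>h $ i\<bar>) {..<n} \<le> H / T * (norm2 v + H)"
      using H by (rule mult_left_mono)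
    moreover have "0 \<le> 3 * eps_mp / T" "0 \<le> 2 * eps_mp / sqrt T" using eps_mp T by auto
    ultimately show ?thesis
      unfolding L2_set_scaled_abs[OF H] L2_set_scaled_abs[OF \<open>0 \<le> 3 * eps_mp / T\<close>]
        L2_set_scaled_abs[OF \<open>0 \<le> 2 * eps_mp / sqrt T\<close>]
      using carriers eps_mp T b by (simp add: L2_set_constant abs_mult norm2_eq_L2_set H_def)
  qed
  finally show ?thesis unfolding H_def T_def .
qed

lemma L2_err_le: "L2_set err {..<n} \<le> 9 * eps_mp * eps + 4 * eps\<^sup>2 + 2 * eps\<^sup>2 * sqrt (real n) / real b"
proof -
  define H where "H = norm2 h"
  define T where "T = t_lo"
  have T: "0 < T" "0 < sqrt T" and b: "0 < real b" using t_lo_pos b_ge_1 unfolding T_def by auto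
  have H: "0 \<le> H" "H \<le> eps * sqrt T" "H\<^sup>2 \<le> eps\<^sup>2 * T"
    using norm2_nonneg norm2_h_le norm2_v_le norm2_v_sq_le power_mono[OF norm2_h_le]
    unfolding H_def T_def by (auto intro: order_trans)
  have "3 * eps_mp / T * norm2 dmu \<le> 3 * eps_mp / T * (97/100 * eps * T)"
    using norm2_dmu_le eps_mp T unfolding T_def by (intro mult_left_mono) auto
  moreover have "3 * eps_mp / T * (97/100 * eps * T) \<le> 3 * eps_mp * eps"
    using T eps eps_mp by simp
  moreover have "sqrt (real n) * (\<bar>tau\<bar> * eps_mp) = eps_mp * eps / 3"
    using sqrt_n_ge_1 by (simp add: abs_tau)
  moreover have "2 * eps_mp / sqrt T * H \<le> 2 * eps_mp / sqrt T * (eps * sqrt T)"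
    using H eps_mp T by (intro mult_left_mono) auto
  moreover have "2 * eps_mp / sqrt T * (eps * sqrt T) = 2 * eps_mp * eps" using T by simp
  moreover have "H * (norm2 v + H) \<le> norm2 v * (norm2 v + norm2 v)"
    using H(1) norm2_h_le unfolding H_def by (intro mult_mono add_mono) auto
  then have "H / T * (norm2 v + H) \<le> 2 * eps\<^sup>2"
    using norm2_v_sq_le T unfolding T_def by (simp add: divide_le_eq power2_eq_square mult_ac)
  moreover have "sqrt (real n) * (H\<^sup>2 / (real b * T)) \<le> sqrt (real n) * (eps\<^sup>2 * T / (real b * T))"
    using H T b by (intro mult_left_mono divide_right_mono) auto
  moreover have "sqrt (real n) * (eps\<^sup>2 * T / (real b * T)) = eps\<^sup>2 * sqrt (real n) / real b"
    using T by simp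
  ultimately have "L2_set err {..<n} \<le> 3 * eps_mp * eps + eps_mp * eps / 3 + 2 * eps_mp * eps
      + 2 * eps\<^sup>2 + eps\<^sup>2 * sqrt (real n) / real b"
    using L2_err_le_norms unfolding H_def T_def by linarith
  also have "\<dots> \<le> 9 * eps_mp * eps + 4 * eps\<^sup>2 + 2 * eps\<^sup>2 * sqrt (real n) / real b"
    using eps eps_mp b by (simp add: field_simps)
  finally show ?thesis .
qed

lemma L2_change_le:
  "L2_set (\<lambda>i. err i + tau + dPhi $ i / mub i) {..<n} \<le> 6 * eps + 2 * eps\<^sup>2 * sqrt (real n) / real b"
proof -
  have "L2_set (\<lambda>i. err i + tau + dPhi $ i / mub i) {..<n}
      \<le> L2_set err {..<n} + L2_set (\<lambda>_. tau) {..<n} + L2_set (\<lambda>i. dPhi $ i / mub i) {..<n}"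
    using L2_set_triangle_ineq[of "\<lambda>i. err i + tau" "\<lambda>i. dPhi $ i / mub i" "{..<n}"]
      L2_set_triangle_ineq[of err "\<lambda>_. tau" "{..<n}"] by linarith
  also have "L2_set (\<lambda>_. tau) {..<n} = eps / 3"
    using sqrt_n_ge_1 by (simp add: L2_set_constant abs_tau)
  also have "L2_set (\<lambda>i. dPhi $ i / mub i) {..<n} \<le> 1 / t_lo * norm2 dPhi"
  proof -
    have "L2_set (\<lambda>i. dPhi $ i / mub i) {..<n} \<le> L2_set (\<lambda>i. 1 / t_lo * \<bar>dPhi $ i\<bar>) {..<n}"
      using abs_divide_le_divide[OF t_lo_pos mub_bounds(1)] by (intro L2_set_abs_mono) auto
    also have "\<dots> = 1 / t_lo * norm2 dPhi"
      by (subst L2_set_scaled_abs) (use t_lo_pos carriers in \<open>auto simp: norm2_eq_L2_set\<close>)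
    finally show ?thesis .
  qed
  also have "1 / t_lo * norm2 dPhi \<le> 5/9 * eps"
    using norm2_dPhi t_lo_pos unfolding t_lo_def by (simp add: field_simps)
  finally have "L2_set (\<lambda>i. err i + tau + dPhi $ i / mub i) {..<n}
      \<le> 9 * eps_mp * eps + 4 * eps\<^sup>2 + 2 * eps\<^sup>2 * sqrt (real n) / real b + eps / 3 + 5/9 * eps"
    using L2_err_le by linarith
  moreover have "eps_mp * eps \<le> 1/10000 * eps" "eps * eps \<le> 1/10000 * eps"
    using eps eps_mp by (simp_all add: mult_right_mono)
  then have "9 * eps_mp * eps + 4 * eps\<^sup>2 \<le> eps / 10"
    unfolding power2_eq_square mult.assoc using eps by linarith
  ultimately show ?thesis using eps by linarith
qed

lemma fourth_moment_Y_le: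
  assumes i: "i < n"
  shows "integrable M (\<lambda>\<omega>. (Y i \<omega> - h $ i) ^ 4)"
    "expectation (\<lambda>\<omega>. (Y i \<omega> - h $ i) ^ 4) \<le> 25400 * ((norm2 v)\<^sup>2 / real b)\<^sup>2 * (ln (real n))\<^sup>2"
proof -
  note Y = sketch_moments[OF i]
  define \<theta> where "\<theta> = norm2 h / sqrt (real b)"
  have \<theta>: "0 \<le> \<theta>" "\<theta>\<^sup>2 = (norm2 h)\<^sup>2 / real b" unfolding \<theta>_def using b_ge_1 norm2_nonneg
    by (auto simp: power_divide)
  have fourth: "integrable M (\<lambda>\<omega>. (Y i \<omega> - h $ i) ^ 4)"
    "expectation (\<lambda>\<omega>. (Y i \<omega> - h $ i) ^ 4) \<le> 25400 * \<theta> ^ 4 * (ln (real n))\<^sup>2"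
    using fourth_moment_le_from_tail[of "\<lambda>\<omega>. Y i \<omega> - h $ i" \<theta> "real n"]
      integrable_shifted_square[OF Y(1,3)] Y(2,4,5) \<theta> n_ge_2 i
    by (auto simp: \<theta>_def mult.commute)
  have "(norm2 h)\<^sup>2 \<le> (norm2 v)\<^sup>2" using norm2_h_le norm2_nonneg by (intro power_mono) auto
  then have "\<theta>\<^sup>2 \<le> (norm2 v)\<^sup>2 / real b" using \<theta>(2) b_ge_1 by (simp add: divide_right_mono)
  then have "(\<theta>\<^sup>2)\<^sup>2 \<le> ((norm2 v)\<^sup>2 / real b)\<^sup>2" by (intro power_mono) auto
  then have "25400 * \<theta> ^ 4 * (ln (real n))\<^sup>2 \<le> 25400 * ((norm2 v)\<^sup>2 / real b)\<^sup>2 * (ln (real n))\<^sup>2"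
    by (intro mult_right_mono) (auto simp: power4_eq_xxxx power2_eq_square)
  then show "expectation (\<lambda>\<omega>. (Y i \<omega> - h $ i) ^ 4) \<le> 25400 * ((norm2 v)\<^sup>2 / real b)\<^sup>2 * (ln (real n))\<^sup>2"
    using fourth(2) by linarith
  show "integrable M (\<lambda>\<omega>. (Y i \<omega> - h $ i) ^ 4)" using fourth(1) .
qed

lemma variance_relative_mu_new_eq:
  assumes i: "i < n"
  shows "variance (\<lambda>\<omega>. mu_new n eps lam t A wt mut xb sb (R \<omega>) $ i / mub i)
    = variance (\<lambda>\<omega>. (mub i + kappa i * dmu $ i) / mub i + (xi i + v $ i) / mub i * Y i \<omega>
        + (- 1 / mub i) * (Y i \<omega>)\<^sup>2)"
proof -
  have q: "mu_new n eps lam t A wt mut xb sb (R \<omega>) $ i / mub i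
      = (mub i + kappa i * dmu $ i) / mub i + (xi i + v $ i) / mub i * Y i \<omega> + (- 1 / mub i) * (Y i \<omega>)\<^sup>2"
    if "\<omega> \<in> space M" for \<omega>
    using mub_bounds(3)[OF i] that by (simp add: mu_new_coord[OF i] field_simps power2_eq_square)
  then have "expectation (\<lambda>\<omega>. mu_new n eps lam t A wt mut xb sb (R \<omega>) $ i / mub i)
      = expectation (\<lambda>\<omega>. (mub i + kappa i * dmu $ i) / mub i + (xi i + v $ i) / mub i * Y i \<omega>
        + (- 1 / mub i) * (Y i \<omega>)\<^sup>2)"
    by (intro Bochner_Integration.integral_cong) auto
  with q show ?thesis by (intro Bochner_Integration.integral_cong) auto
qed

lemma variance_relative_mu_new_le:
  assumes i: "i < n"
  shows "variance (\<lambda>\<omega>. mu_new n eps lam t A wt mut xb sb (R \<omega>) $ i / mub i)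
    \<le> 16 * eps_mp\<^sup>2 * eps\<^sup>2 / real b + 320 * eps ^ 4 / real b"
proof -
  note Y = sketch_moments[OF i]
  have "(norm2 h)\<^sup>2 \<le> (norm2 v)\<^sup>2" using norm2_h_le norm2_nonneg by (intro power_mono) auto
  then have var: "variance (Y i) \<le> (norm2 v)\<^sup>2 / real b"
    using Y(4) b_ge_1 by (meson divide_right_mono of_nat_0_le_iff order_trans)
  have h: "\<bar>h $ i\<bar> \<le> norm2 v" using index_le_norm2_v(2)[OF i] norm2_h_le by linarith
  have "variance (\<lambda>\<omega>. (mub i + kappa i * dmu $ i) / mub i + (xi i + v $ i) / mub i * Y i \<omega>
        + (- 1 / mub i) * (Y i \<omega>)\<^sup>2)
      \<le> 2 * ((xi i + v $ i) / mub i + 2 * (- 1 / mub i) * h $ i)\<^sup>2 * variance (Y i)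
        + 2 * (- 1 / mub i)\<^sup>2 * ((variance (Y i))\<^sup>2 + expectation (\<lambda>\<omega>. (Y i \<omega> - h $ i) ^ 4))"
    using variance_quadratic_le[OF Y(1,3) fourth_moment_Y_le(1)[OF i, folded Y(2)],
        where a = "(mub i + kappa i * dmu $ i) / mub i" and b = "(xi i + v $ i) / mub i"
        and c = "- 1 / mub i"]
    unfolding Y(2) .
  also have "\<dots> \<le> 16 * eps_mp\<^sup>2 * eps\<^sup>2 / real b + 320 * eps ^ 4 / real b"
    by (rule variance_coordinate_le[OF t_lo_pos mub_bounds(1)[OF i] scaling_errors(2)[OF i]
        index_le_norm2_v(1)[OF i] h variance_positive var norm2_v_sq_le b_ge_1 _
        fourth_moment_Y_le(2)[OF i]]) (use b_large in simp)
  finally show ?thesis unfolding variance_relative_mu_new_eq[OF i] .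
qed

lemma tail_threshold_le: "ln (real n / (1 / (real n)\<^sup>2)) / sqrt (real b) \<le> 1/10"
proof -
  have L: "0 < ln (real n)" using n_ge_2 by simp
  have "real n / (1 / (real n)\<^sup>2) = real n ^ 3"
    using n_ge_2 by (simp add: power2_eq_square power3_eq_cube)
  then have "ln (real n / (1 / (real n)\<^sup>2)) = 3 * ln (real n)"
    using n_ge_2 by (simp add: ln_realpow)
  moreover have "30 * ln (real n) \<le> sqrt (real b)"
  proof -
    have "sqrt (900 * (ln (real n))\<^sup>2) \<le> sqrt (real b)"
      using b_large by (intro real_sqrt_le_mono) simp
    then show ?thesis using L by (simp add: real_sqrt_mult)
  qed
  ultimately show ?thesis using L by (simp add: divide_le_eq)
qed

lemma relative_change_le:
  assumes i: "i < n" and \<omega>: "\<omega> \<in> space M" and close: "\<bar>Y i \<omega> - h $ i\<bar> \<le> norm2 h / 10"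
  shows "\<bar>(mu_new n eps lam t A wt mut xb sb (R \<omega>) $ i - mub i) / mub i\<bar> \<le> 6 * eps"
proof -
  have "\<bar>Y i \<omega>\<bar> \<le> 11/10 * norm2 v"
    using close index_le_norm2_v(2)[OF i] norm2_h_le by linarith
  moreover have "\<bar>dmu $ i\<bar> \<le> 97/100 * eps * t_lo"
    using norm2_dmu_le index_le_norm2_v(3)[OF i] by linarith
  ultimately have "\<bar>(kappa i * dmu $ i + xi i * Y i \<omega> + (v $ i - Y i \<omega>) * Y i \<omega>) / mub i\<bar> \<le> 6 * eps"
    using relative_change_coordinate_le[OF t_lo_pos mub_bounds(1)[OF i] scaling_errors(1)[OF i]
        eps_mp(2) _ scaling_errors(2)[OF i] index_le_norm2_v(1)[OF i] _ norm2_v_sq_le eps]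
    by blast
  then show ?thesis
    by (simp add: mu_new_coord[OF i \<omega>] algebra_simps power2_eq_square)
qed

lemma relative_change_event:
  assumes i: "i < n"
  shows "{\<omega> \<in> space M. \<bar>(mu_new n eps lam t A wt mut xb sb (R \<omega>) $ i - mub i) / mub i\<bar> \<le> 6 * eps}
    \<in> events"
proof -
  have "{\<omega> \<in> space M. \<bar>(mu_new n eps lam t A wt mut xb sb (R \<omega>) $ i - mub i) / mub i\<bar> \<le> 6 * eps}
    = {\<omega> \<in> space M. \<bar>(mub i + kappa i * dmu $ i + (xi i + v $ i) * Y i \<omega> - (Y i \<omega>)\<^sup>2 - mub i)
        / mub i\<bar> \<le> 6 * eps}"
    by (auto simp: mu_new_coord[OF i])
  also have "\<dots> \<in> events" using i by measurable
  finally show ?thesis .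
qed

lemma prob_relative_change_fails_le:
  assumes i: "i < n"
  shows "prob {\<omega> \<in> space M. \<not> \<bar>(mu_new n eps lam t A wt mut xb sb (R \<omega>) $ i - mub i) / mub i\<bar>
    \<le> 6 * eps} \<le> 1 / (real n)\<^sup>2"
proof -
  define \<delta> :: real where "\<delta> = 1 / (real n)\<^sup>2"
  have \<delta>: "0 < \<delta>" "\<delta> < 1" unfolding \<delta>_def using n_ge_2 one_less_power[of "real n" 2] by auto
  have "norm2 h * (ln (real n / \<delta>) / sqrt (real b)) \<le> norm2 h * (1/10)"
    using mult_left_mono[OF tail_threshold_le norm2_nonneg[of h]] unfolding \<delta>_def .
  then have thr: "norm2 h * ln (real n / \<delta>) / sqrt (real b) \<le> norm2 h / 10" by simp
  have "{\<omega> \<in> space M. \<not> \<bar>(mu_new n eps lam t A wt mut xb sb (R \<omega>) $ i - mub i) / mub i\<bar> \<le> 6 * eps}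
      \<subseteq> {\<omega> \<in> space M. norm2 h * ln (real n / \<delta>) / sqrt (real b) < \<bar>Y i \<omega> - h $ i\<bar>}"
  proof (intro subsetI)
    fix \<omega> assume "\<omega> \<in> {\<omega> \<in> space M.
      \<not> \<bar>(mu_new n eps lam t A wt mut xb sb (R \<omega>) $ i - mub i) / mub i\<bar> \<le> 6 * eps}"
    then have "\<omega> \<in> space M" "norm2 h / 10 < \<bar>Y i \<omega> - h $ i\<bar>"
      using relative_change_le[OF i] by force+
    moreover from this(2) thr have "norm2 h * ln (real n / \<delta>) / sqrt (real b) < \<bar>Y i \<omega> - h $ i\<bar>"
      by linarith
    ultimately show "\<omega> \<in> {\<omega> \<in> space M. norm2 h * ln (real n / \<delta>) / sqrt (real b) < \<bar>Y i \<omega> - h $ i\<bar>}"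
      by simp
  qed
  then have "prob {\<omega> \<in> space M. \<not> \<bar>(mu_new n eps lam t A wt mut xb sb (R \<omega>) $ i - mub i) / mub i\<bar>
      \<le> 6 * eps} \<le> prob {\<omega> \<in> space M. norm2 h * ln (real n / \<delta>) / sqrt (real b) < \<bar>Y i \<omega> - h $ i\<bar>}"
    using i by (intro finite_measure_mono) measurable
  also have "\<dots> \<le> \<delta>" using sketch_moments(5)[OF i \<delta>] .
  finally show ?thesis unfolding \<delta>_def .
qed

lemma prob_relative_change_le:
  "1 - 1 / real n \<le> prob {\<omega> \<in> space M. \<forall>i<n.
     \<bar>(mu_new n eps lam t A wt mut xb sb (R \<omega>) $ i - mub i) / mub i\<bar> \<le> 6 * eps}"
proof -
  have "1 - real (card {..<n}) * (1 / (real n)\<^sup>2) \<le> prob {\<omega> \<in> space M. \<forall>i\<in>{..<n}.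
      \<bar>(mu_new n eps lam t A wt mut xb sb (R \<omega>) $ i - mub i) / mub i\<bar> \<le> 6 * eps}"
    using relative_change_event prob_relative_change_fails_le by (intro prob_all_ge_union_bound) auto
  moreover have "real (card {..<n}) * (1 / (real n)\<^sup>2) = 1 / real n"
    using n_ge_2 by (simp add: power2_eq_square)
  ultimately show ?thesis by (simp add: Ball_def)
qed

lemma expected_error_bound:
  "norm2 (Matrix.vec n (\<lambda>i. expectation (\<lambda>\<omega>. (mu_new n eps lam t A wt mut xb sb (R \<omega>) $ i
      - vmul xb sb $ i - delta_t n eps t (vmul xb sb) $ i - dPhi $ i) / vmul xb sb $ i)))
    \<le> 9 * eps_mp * eps + 4 * eps\<^sup>2 + 2 * eps\<^sup>2 * sqrt (real n) / real b"
proof -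
  have "norm2 (Matrix.vec n (\<lambda>i. expectation (\<lambda>\<omega>. (mu_new n eps lam t A wt mut xb sb (R \<omega>) $ i
      - vmul xb sb $ i - delta_t n eps t (vmul xb sb) $ i - dPhi $ i) / vmul xb sb $ i))) = L2_set err {..<n}"
    unfolding norm2_vec
    by (intro L2_set_cong) (simp_all only: lessThan_iff vmul_index delta_t_index expected_error_eq)
  then show ?thesis using L2_err_le by simp
qed

lemma expected_change_bound:
  "norm2 (Matrix.vec n (\<lambda>i. expectation (\<lambda>\<omega>.
      (mu_new n eps lam t A wt mut xb sb (R \<omega>) $ i - vmul xb sb $ i) / vmul xb sb $ i)))
    \<le> 6 * eps + 2 * eps\<^sup>2 * sqrt (real n) / real b"
proof -
  have "norm2 (Matrix.vec n (\<lambda>i. expectation (\<lambda>\<omega>.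
      (mu_new n eps lam t A wt mut xb sb (R \<omega>) $ i - vmul xb sb $ i) / vmul xb sb $ i)))
    = L2_set (\<lambda>i. err i + tau + dPhi $ i / mub i) {..<n}"
    unfolding norm2_vec
    by (intro L2_set_cong) (simp_all only: lessThan_iff vmul_index expected_change_eq)
  then show ?thesis using L2_change_le by simp
qed

lemma prob_variance_bound:
  "1 - 1 / real n \<le> prob {\<omega> \<in> space M. \<forall>i<n.
     variance (\<lambda>\<omega>'. mu_new n eps lam t A wt mut xb sb (R \<omega>') $ i / vmul xb sb $ i)
       \<le> 16 * eps_mp\<^sup>2 * eps\<^sup>2 / real b + 320 * eps ^ 4 / real b}"
proof -
  have "{\<omega> \<in> space M. \<forall>i<n. variance (\<lambda>\<omega>'. mu_new n eps lam t A wt mut xb sb (R \<omega>') $ i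
      / vmul xb sb $ i) \<le> 16 * eps_mp\<^sup>2 * eps\<^sup>2 / real b + 320 * eps ^ 4 / real b} = space M"
    using variance_relative_mu_new_le by auto
  then show ?thesis using prob_space n_ge_2 by simp
qed

end

theorem lemmaB21:
  "\<exists>c::real. c > 0 \<and>
   (\<forall>(n::nat) (d::nat) (b::nat) (A::real mat) (eps::real) (eps_mp::real) (lam::real) (t::real)
      (xb::real vec) (sb::real vec) (wt::real vec) (mut::real vec)
      (M::'w measure) (R::'w \<Rightarrow> real mat).
    n \<ge> 2 \<and> d \<le> n \<and> full_row_rank d n A \<and>
    0 < eps \<and> eps < 1/10000 \<and> 0 < eps_mp \<and> eps_mp < 1/10000 \<and>
    lam > ln (real n) \<and> real b \<ge> 1000 * (ln (real n))\<^sup>2 \<and> t > 0 \<and>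
    xb \<in> carrier_vec n \<and> sb \<in> carrier_vec n \<and> pos_vec xb \<and> pos_vec sb \<and>
    wt \<in> carrier_vec n \<and> mut \<in> carrier_vec n \<and> pos_vec wt \<and> pos_vec mut \<and>
    approx_vec mut eps_mp (vmul xb sb) \<and> approx_vec wt eps_mp (vdivide xb sb) \<and>
    approx_scal (vmul xb sb) (1/10) t \<and>
    gradPhi lam (Matrix.vec n (\<lambda>i. mut $ i / t - 1)) \<noteq> 0\<^sub>v n \<and>
    sketch_hyps M b n R
    \<longrightarrow>
    (let mub = vmul xb sb;
         mun = (\<lambda>\<omega>. mu_new n eps lam t A wt mut xb sb (R \<omega>));
         dtb = delta_t n eps t mub;
         dPhi = delta_Phi n eps lam t mut
     in
       norm2 (Matrix.vec n (\<lambda>i. integral\<^sup>L M (\<lambda>\<omega>.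
           (mun \<omega> $ i - mub $ i - dtb $ i - dPhi $ i) / mub $ i)))
         \<le> 9 * eps_mp * eps + 4 * eps\<^sup>2 + 2 * eps\<^sup>2 * sqrt (real n) / real b
     \<and> measure M {\<omega> \<in> space M. \<forall>i<n.
           integral\<^sup>L M (\<lambda>\<omega>'. (mun \<omega>' $ i / mub $ i
               - integral\<^sup>L M (\<lambda>\<omega>''. mun \<omega>'' $ i / mub $ i))\<^sup>2)
           \<le> 16 * eps_mp\<^sup>2 * eps\<^sup>2 / real b + 320 * eps ^ 4 / real b}
         \<ge> 1 - 1 / real n powr c
     \<and> measure M {\<omega> \<in> space M. \<forall>i<n. \<bar>(mun \<omega> $ i - mub $ i) / mub $ i\<bar> \<le> 6 * eps}
         \<ge> 1 - 1 / real n powr c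
     \<and> norm2 (Matrix.vec n (\<lambda>i. integral\<^sup>L M (\<lambda>\<omega>. (mun \<omega> $ i - mub $ i) / mub $ i)))
         \<le> 6 * eps + 2 * eps\<^sup>2 * sqrt (real n) / real b))"
  apply (intro exI[of _ 1] conjI allI impI)
   apply simp
  subgoal premises hyps for n d b A eps eps_mp lam t xb sb wt mut M R
  proof -
    interpret sketched_step n d b A eps eps_mp lam t xb sb wt mut M R
      using hyps by unfold_locales auto
    show ?thesis
      using expected_error_bound expected_change_bound prob_variance_bound prob_relative_change_le
        n_ge_2
      unfolding Let_def dPhi_def[symmetric] by simp
  qed
  done

end
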